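(* Let $n>1$. Then $$\sum_{T \in \mathcal{C}_{n+1}} y^{\mathrm{impe}(T)} (t+1)^{\mathrm{impp}(T)} x^{\deg_T(1)-1} z^{\mathrm{lead}(T)-\deg_T(1)-1} = \sum_{T \in \mathcal{O}_{n+1}} y^{\mathrm{impe}(T)+\mathrm{eld}(T)}\, t^{\mathrm{eld}(T)}\, x^{\mathrm{young}_T(1)-1}\, z^{n-\mathrm{impe}(T) - \mathrm{young}_T(1) - \mathrm{eld}(T)}.$$
   Context: $\mathcal{C}_m$ is the set of Cayley trees on $[m]$ rooted at $1$, and $\mathcal{O}_m$ is the set of planar trees (rooted labelled trees in which the children of each vertex are linearly ordered, left to right) with vertex set labelled bijectively by $[m]$, rooted at $1$. Edges are oriented from parent to child; $\lambda_T$ is the label and $\beta_T(v)$ the smallest label among descendants of $v$ ($v$ included). For Cayley trees: an edge $(i,j)$ is improper if $\lambda_T(i)>\beta_T(j)$; $\mathrm{impe}(T)$ = number of improper edges; a vertex is an improper parent if it has an improper child, $\mathrm{impp}(T)$ = number of improper parents; $\deg_T(1)$ = degree of the root; for a vertex $i$ with root-to-$i$ path $(1=a_0,\dots,a_k=i)$, its greater ancestors path is the longest suffix $(a_p,\dots,a_k)$ whose vertices $j$ all satisfy $\lambda_T(j)\ge\lambda_T(i)$, $i$ is leading if $\beta_T(a_p)=\lambda_T(i)$, and $\mathrm{lead}(T)$ = number of leading vertices. For planar trees: a vertex $j$ is elder if it has a sibling $k$ to its right with $\beta_T(k)<\beta_T(j)$, and younger otherwise; $\mathrm{eld}(T)$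 = number of elder vertices; $\mathrm{young}_T(1)$ = number of younger children of the root $1$; an edge $(i,j)$ is improper if $j$ is a younger child of $i$ and $\lambda_T(i)>\beta_T(j)$; $\mathrm{impe}(T)$ = number of improper edges. *)

theory Defs
  imports Main
begin

text \<open>Rooted trees on vertex set [m] = {1..m}, rooted at 1, labels = vertices.
A tree is encoded by its parent function par: par v is the parent of v for
v in {2..m}; par is 0 outside {2..m} (canonical encoding, so 0 serves as a
sentinel above the root).\<close>

definition is_cayley :: "nat \<Rightarrow> (nat \<Rightarrow> nat) \<Rightarrow> bool" where
  "is_cayley m par \<longleftrightarrow>
     (\<forall>v\<in>{2..m}. par v \<in> {1..m}) \<and>
     (\<forall>v. v \<notin> {2..m} \<longrightarrow> par v = 0) \<and>
     (\<forall>v\<in>{1..m}. \<exists>k. (par ^^ k) v = 1)"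

definition cayley_trees :: "nat \<Rightarrow> (nat \<Rightarrow> nat) set" where
  "cayley_trees m = {par. is_cayley m par}"

definition desc :: "(nat \<Rightarrow> nat) \<Rightarrow> nat \<Rightarrow> nat \<Rightarrow> bool" where
  "desc par u v \<longleftrightarrow> (\<exists>k. (par ^^ k) u = v)"

definition beta :: "nat \<Rightarrow> (nat \<Rightarrow> nat) \<Rightarrow> nat \<Rightarrow> nat" where
  "beta m par v = Min {u\<in>{1..m}. desc par u v}"

definition impe_C :: "nat \<Rightarrow> (nat \<Rightarrow> nat) \<Rightarrow> nat" where
  "impe_C m par = card {j\<in>{2..m}. par j > beta m par j}"

definition impp_C :: "nat \<Rightarrow> (nat \<Rightarrow> nat) \<Rightarrow> nat" where
  "impp_C m par = card {i\<in>{1..m}. \<exists>j\<in>{2..m}. par j = i \<and> i > beta m par j}"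

definition deg_root :: "nat \<Rightarrow> (nat \<Rightarrow> nat) \<Rightarrow> nat" where
  "deg_root m par = card {j\<in>{2..m}. par j = 1}"

text \<open>Top vertex a_p of the greater ancestors path of i: the farthest ancestor
reached from i such that all vertices from i up to it have label \<ge> i
(the sentinel 0 above the root guarantees this is well defined).\<close>
definition gap_top :: "(nat \<Rightarrow> nat) \<Rightarrow> nat \<Rightarrow> nat" where
  "gap_top par i = (par ^^ (GREATEST k. \<forall>k'\<le>k. (par ^^ k') i \<ge> i)) i"

definition leading :: "nat \<Rightarrow> (nat \<Rightarrow> nat) \<Rightarrow> nat \<Rightarrow> bool" where
  "leading m par i \<longleftrightarrow> beta m par (gap_top par i) = i"

definition lead :: "nat \<Rightarrow> (nat \<Rightarrow> nat) \<Rightarrow> nat" where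
  "lead m par = card {i\<in>{1..m}. leading m par i}"

text \<open>Planar trees: a Cayley tree par together with, for each vertex v,
the list ord v of its children ordered left to right (ord v = [] outside [m]).\<close>
definition planar_trees :: "nat \<Rightarrow> ((nat \<Rightarrow> nat) \<times> (nat \<Rightarrow> nat list)) set" where
  "planar_trees m = {(par, ord). is_cayley m par \<and>
      (\<forall>v\<in>{1..m}. distinct (ord v) \<and> set (ord v) = {j\<in>{2..m}. par j = v}) \<and>
      (\<forall>v. v \<notin> {1..m} \<longrightarrow> ord v = [])}"

definition elder :: "nat \<Rightarrow> (nat \<Rightarrow> nat) \<Rightarrow> (nat \<Rightarrow> nat list) \<Rightarrow> nat \<Rightarrow> bool" where
  "elder m par ord j \<longleftrightarrow> j \<in> {2..m} \<and>
     (\<exists>a b. a < b \<and> b < length (ord (par j)) \<and> ord (par j) ! a = j \<and>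
            beta m par (ord (par j) ! b) < beta m par j)"

definition younger :: "nat \<Rightarrow> (nat \<Rightarrow> nat) \<Rightarrow> (nat \<Rightarrow> nat list) \<Rightarrow> nat \<Rightarrow> bool" where
  "younger m par ord j \<longleftrightarrow> j \<in> {2..m} \<and> \<not> elder m par ord j"

definition eld :: "nat \<Rightarrow> (nat \<Rightarrow> nat) \<Rightarrow> (nat \<Rightarrow> nat list) \<Rightarrow> nat" where
  "eld m par ord = card {j\<in>{1..m}. elder m par ord j}"

definition young_root :: "nat \<Rightarrow> (nat \<Rightarrow> nat) \<Rightarrow> (nat \<Rightarrow> nat list) \<Rightarrow> nat" where
  "young_root m par ord = card {j\<in>{2..m}. par j = 1 \<and> younger m par ord j}"

definition impe_O :: "nat \<Rightarrow> (nat \<Rightarrow> nat) \<Rightarrow> (nat \<Rightarrow> nat list) \<Rightarrow> nat" where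
  "impe_O m par ord = card {j\<in>{2..m}. younger m par ord j \<and> par j > beta m par j}"

end

theory Submission
  imports Defs "HOL-Library.Product_Lexorder" "HOL-Library.FuncSet"
begin

text \<open>The two sums are related by a bijection between planar trees and Cayley trees \<open>T\<close> with a
  marked set \<open>S\<close> of improper parents. In a planar tree, move every vertex whose left sibling is
  elder below that sibling: each maximal run of elder siblings, closed by a younger one, becomes
  a path, and the former elder vertices become the marked improper parents of the resulting \<open>T\<close>.
  Conversely \<open>(T, S)\<close> determines the planar tree: the child of a marked vertex that carries
  the minimum of its subtree becomes its right sibling again, and siblings are ordered by subtree
  minimum. Along this bijection \<open>T\<close> has one improper
  edge per elder vertex plus one per improper edge of the planar tree, its root has as many
  children as the planar root has younger children, and \<open>|S|\<close> is the number of elder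
  vertices; summing over all subsets \<open>S\<close> of the improper parents yields the factor
  \<open>(t + 1) ^ impp\<close>. Finally \<open>lead T = m - impe T\<close>, because \<open>beta\<close> maps the root and the heads
  of the proper edges bijectively onto the leading vertices.\<close>

lemma desc_refl [simp]: "desc f v v"
  unfolding desc_def by (metis funpow_0)

lemma desc_trans: "desc f u v \<Longrightarrow> desc f v w \<Longrightarrow> desc f u w"
  unfolding desc_def by (metis comp_apply funpow_add)

lemma desc_parent: "desc f u (f u)"
  unfolding desc_def by (metis funpow_0 funpow.simps(2) o_apply)

lemma desc_step:
  assumes "desc f u v" "u \<noteq> v"
  shows "desc f (f u) v"
proof -
  obtain k where k: "(f ^^ k) u = v" using assms(1) unfolding desc_def by blast
  with assms(2) obtain k' where "k = Suc k'" by (cases k) auto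
  with k have "(f ^^ k') (f u) = v" by (simp add: funpow_Suc_right del: funpow.simps)
  then show ?thesis unfolding desc_def by blast
qed

lemma desc_linear:
  assumes "desc f u a" "desc f u b"
  shows "desc f a b \<or> desc f b a"
proof -
  obtain ka kb where a: "(f ^^ ka) u = a" and b: "(f ^^ kb) u = b"
    using assms unfolding desc_def by blast
  have "(f ^^ (kb - ka)) a = b" if "ka \<le> kb"
    using a b that by (metis funpow_add le_add_diff_inverse2 o_apply)
  moreover have "(f ^^ (ka - kb)) b = a" if "kb \<le> ka"
    using a b that by (metis funpow_add le_add_diff_inverse2 o_apply)
  ultimately show ?thesis unfolding desc_def by (meson nat_le_linear)
qed

lemma desc_induct [consumes 1, case_names refl step]:
  assumes "desc f u v" and "P v"
    and "\<And>u. desc f (f u) v \<Longrightarrow> u \<noteq> v \<Longrightarrow> P (f u) \<Longrightarrow> P u"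
  shows "P u"
proof -
  obtain k where "(f ^^ k) u = v" using assms(1) unfolding desc_def by blast
  then show ?thesis
  proof (induction k arbitrary: u)
    case 0
    then show ?case using assms(2) by simp
  next
    case (Suc k)
    then have "(f ^^ k) (f u) = v" by (simp add: funpow_Suc_right del: funpow.simps)
    then have "desc f (f u) v" and "P (f u)" using Suc.IH unfolding desc_def by blast+
    then show ?case using assms(2,3) by (cases "u = v") auto
  qed
qed

lemma strict_sorted_map_unique:
  fixes f :: "'a \<Rightarrow> 'b::linorder"
  assumes "sorted_wrt (<) (map f xs)" "sorted_wrt (<) (map f ys)" "set xs = set ys"
  shows "xs = ys"
proof -
  have "map f xs = map f ys" using strict_sorted_equal[OF assms(1,2)] assms(3) by simp
  moreover have "distinct (map f xs)" using assms(1) strict_sorted_iff by blast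
  then have "inj_on f (set xs \<union> set ys)" using assms(3) by (simp add: distinct_map)
  ultimately show ?thesis using map_inj_on by blast
qed

lemma sum_Pow_power_card:
  fixes t :: "'a::comm_semiring_1"
  assumes "finite X"
  shows "(\<Sum>S\<in>Pow X. t ^ card S) = (t + 1) ^ card X"
  using prod_add[OF assms, of "\<lambda>_. t" "\<lambda>_. 1"] by simp

section \<open>Cayley trees\<close>

locale cayley_tree =
  fixes m :: nat and par :: "nat \<Rightarrow> nat"
  assumes is_cayley: "is_cayley m par"
begin

lemma par_in: "v \<in> {2..m} \<Longrightarrow> par v \<in> {1..m}"
  using is_cayley unfolding is_cayley_def by blast

lemma par_eq_0: "v \<notin> {2..m} \<Longrightarrow> par v = 0"
  using is_cayley unfolding is_cayley_def by blast

lemma par_0_1 [simp]: "par 0 = 0" "par 1 = 0" "par (Suc 0) = 0"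
  by (auto intro: par_eq_0)

lemma funpow_par_0 [simp]: "(par ^^ k) 0 = 0"
  by (induction k) auto

lemma reaches_root: "v \<in> {1..m} \<Longrightarrow> \<exists>k. (par ^^ k) v = 1"
  using is_cayley unfolding is_cayley_def by blast

lemma desc_root: "u \<in> {1..m} \<Longrightarrow> desc par u 1"
  unfolding desc_def using reaches_root by blast

lemma par_le: "par v \<le> m"
  using par_in[of v] par_eq_0[of v] by (cases "v \<in> {2..m}") auto

lemma funpow_par_le: "v \<le> m \<Longrightarrow> (par ^^ k) v \<le> m"
  by (induction k) (auto simp: par_le)

lemma funpow_par_cycle:
  assumes "v \<ge> 1" and cycle: "(par ^^ k) v = v"
  shows "k = 0"
proof (rule ccontr)
  assume "k \<noteq> 0"
  then obtain k' where k': "k = Suc k'" by (cases k) auto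
  have "v \<in> {1..m}"
  proof (rule ccontr)
    assume "v \<notin> {1..m}"
    then have "par v = 0" using par_eq_0 by auto
    then show False using cycle assms(1) k' by (simp add: funpow_Suc_right del: funpow.simps)
  qed
  then obtain K where K: "(par ^^ K) v = 1" using reaches_root by auto
  have periodic: "(par ^^ (k * j)) v = v" for j
    by (induction j) (simp_all add: funpow_add cycle)
  \<comment> \<open>beyond the root the iteration stays at the sentinel 0\<close>
  have after_root: "(par ^^ (Suc j + K)) v = 0" for j
    by (induction j) (simp_all add: funpow_add K)
  have "k * Suc K = Suc (k * Suc K - K - 1) + K"
    using k' by simp
  then have "(par ^^ (k * Suc K)) v = 0" using after_root by metis
  then show False using periodic[of "Suc K"] assms(1) by simp
qed

lemma desc_antisym:
  assumes "u \<ge> 1" "desc par u v" "desc par v u"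
  shows "u = v"
proof -
  obtain a b where a: "(par ^^ a) u = v" and b: "(par ^^ b) v = u"
    using assms(2,3) unfolding desc_def by blast
  then have "(par ^^ (b + a)) u = u" by (simp add: funpow_add)
  then have "b + a = 0" using funpow_par_cycle assms(1) by blast
  then show ?thesis using a by simp
qed

lemma desc_0: "desc par 0 v \<Longrightarrow> v = 0"
  unfolding desc_def by auto

lemma desc_in_range:
  assumes "desc par u v" and "v \<in> {1..m}"
  shows "u \<in> {1..m}"
proof -
  obtain k where k: "(par ^^ k) u = v" using assms(1) unfolding desc_def by blast
  have "u \<noteq> 0" using k assms(2) by (cases "u = 0") auto
  moreover have "u \<le> m"
  proof (rule ccontr)
    assume "\<not> u \<le> m"
    then have "par u = 0" using par_eq_0 by auto
    then show False using k assms(2) \<open>\<not> u \<le> m\<close>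
      by (cases k) (auto simp: funpow_Suc_right simp del: funpow.simps)
  qed
  ultimately show ?thesis by auto
qed

lemma not_desc_par:
  assumes "b \<in> {2..m}"
  shows "\<not> desc par (par b) b"
proof
  assume "desc par (par b) b"
  moreover have "par b \<ge> 1" using par_in[OF assms] by auto
  ultimately have "par b = b" using desc_antisym desc_parent by blast
  then show False using funpow_par_cycle[of b 1] assms by auto
qed

lemma desc_between_parent:
  assumes "w \<in> {2..m}" "desc par w q" "desc par q (par w)"
  shows "q = w \<or> q = par w"
proof (cases "q = w")
  case False
  then have "desc par (par w) q" using desc_step assms(2) by blast
  moreover have "par w \<ge> 1" using par_in assms(1) by auto
  ultimately show ?thesis using desc_antisym assms(3) by blast
qed simp

lemma siblings_no_common_desc:
  assumes "a \<in> {2..m}" "b \<in> {2..m}" "par a = par b" "a \<noteq> b" "desc par u a" "desc par u b"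
  shows False
  using desc_linear[OF assms(5,6)]
proof
  assume "desc par a b"
  then have "desc par (par b) b" using desc_step assms(3,4) by metis
  then show False using not_desc_par assms(2) by blast
next
  assume "desc par b a"
  then have "desc par (par a) a" using desc_step assms(3,4) by metis
  then show False using not_desc_par assms(1) by blast
qed

lemma beta_in: "v \<in> {1..m} \<Longrightarrow> beta m par v \<in> {1..m}"
  and desc_beta: "v \<in> {1..m} \<Longrightarrow> desc par (beta m par v) v"
proof -
  assume "v \<in> {1..m}"
  then have "{u\<in>{1..m}. desc par u v} \<noteq> {}" by auto
  then have "beta m par v \<in> {u\<in>{1..m}. desc par u v}"
    unfolding beta_def by (intro Min_in) auto
  then show "beta m par v \<in> {1..m}" "desc par (beta m par v) v" by auto
qed

lemma beta_le_desc: "u \<in> {1..m} \<Longrightarrow> desc par u v \<Longrightarrow> beta m par v \<le> u"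
  unfolding beta_def by (simp add: Min_le)

lemma beta_le: "v \<in> {1..m} \<Longrightarrow> beta m par v \<le> v"
  by (simp add: beta_le_desc)

lemma beta_mono:
  assumes "v \<in> {1..m}" "w \<in> {1..m}" "desc par v w"
  shows "beta m par w \<le> beta m par v"
  using beta_le_desc[OF beta_in[OF assms(1)] desc_trans[OF desc_beta[OF assms(1)] assms(3)]] .

lemma beta_siblings_neq:
  assumes "a \<in> {2..m}" "b \<in> {2..m}" "par a = par b" "a \<noteq> b"
  shows "beta m par a \<noteq> beta m par b"
  using desc_beta[of a] desc_beta[of b] siblings_no_common_desc[OF assms] assms by fastforce

lemma beta_eqI:
  assumes "\<And>u. u \<in> {1..m} \<Longrightarrow> desc par u v \<longleftrightarrow> P u"
    and "x \<in> {1..m}" "P x" "\<And>u. u \<in> {1..m} \<Longrightarrow> P u \<Longrightarrow> x \<le> u"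
  shows "beta m par v = x"
proof -
  have "{u\<in>{1..m}. desc par u v} = {u\<in>{1..m}. P u}" using assms(1) by auto
  then have "beta m par v = Min {u\<in>{1..m}. P u}" unfolding beta_def by simp
  also have "\<dots> = x" by (rule Min_eqI) (use assms in auto)
  finally show ?thesis .
qed

lemma par_neq_beta: "x \<in> {2..m} \<Longrightarrow> par x \<noteq> beta m par x"
  using desc_beta not_desc_par by fastforce

definition depth :: "nat \<Rightarrow> nat" where
  "depth v = (LEAST k. (par ^^ k) v = 1)"

lemma funpow_depth: "v \<in> {1..m} \<Longrightarrow> (par ^^ depth v) v = 1"
  unfolding depth_def using reaches_root by (meson LeastI_ex)

lemma depth_unique:
  assumes "(par ^^ k) v = 1" "v \<in> {1..m}"
  shows "k = depth v"
proof -
  have le: "depth v \<le> k" unfolding depth_def using assms(1) by (rule Least_le)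
  then have "k = (k - depth v) + depth v" by simp
  then have "(par ^^ (k - depth v)) 1 = 1"
    using assms funpow_depth[OF assms(2)] by (metis funpow_add comp_apply)
  then show ?thesis using funpow_par_cycle[of 1 "k - depth v"] le by simp
qed

lemma depth_par:
  assumes "v \<in> {2..m}"
  shows "depth v = Suc (depth (par v))"
proof -
  have "(par ^^ depth (par v)) (par v) = 1" using funpow_depth par_in assms by blast
  then have "(par ^^ Suc (depth (par v))) v = 1"
    by (simp add: funpow_Suc_right del: funpow.simps)
  then show ?thesis by (intro depth_unique[symmetric]) (use assms in auto)
qed

lemma funpow_par_inj:
  assumes "(par ^^ i) u = (par ^^ j) u" "(par ^^ i) u \<ge> 1" "i \<le> j"
  shows "i = j"
proof -
  have "j = (j - i) + i" using assms(3) by simp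
  then have "(par ^^ (j - i)) ((par ^^ i) u) = (par ^^ i) u"
    using assms(1) by (metis funpow_add comp_apply)
  then have "j - i = 0" by (rule funpow_par_cycle[OF assms(2)])
  with assms(3) show ?thesis by simp
qed

end

section \<open>Leading vertices\<close>

lemma impe_C_le: "impe_C m f \<le> m - 1"
proof -
  have "impe_C m f \<le> card {2..m}" unfolding impe_C_def by (rule card_mono) auto
  then show ?thesis by simp
qed

context cayley_tree
begin

lemma gap_top_eqI:
  assumes "(par ^^ K) i = a" "\<forall>k\<le>K. i \<le> (par ^^ k) i" "par a < i"
  shows "gap_top par i = a"
proof -
  have "(GREATEST k. \<forall>k'\<le>k. i \<le> (par ^^ k') i) = K"
  proof (rule Greatest_equality)
    fix k assume k: "\<forall>k'\<le>k. i \<le> (par ^^ k') i"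
    show "k \<le> K"
    proof (rule ccontr)
      assume "\<not> k \<le> K"
      then have "i \<le> (par ^^ Suc K) i" using k by (simp del: funpow.simps)
      then show False using assms(1,3) by simp
    qed
  qed (use assms(2) in blast)
  then show ?thesis unfolding gap_top_def using assms(1) by simp
qed

lemma gap_top_exists:
  assumes "i \<in> {1..m}"
  obtains K where "\<forall>k\<le>K. i \<le> (par ^^ k) i" "par ((par ^^ K) i) < i"
proof -
  define K where "K = (LEAST k. (par ^^ Suc k) i < i)"
  have "(par ^^ Suc (depth i)) i < i" using funpow_depth assms by simp
  then have "(par ^^ Suc K) i < i" unfolding K_def by (rule LeastI)
  moreover have "i \<le> (par ^^ k) i" if "k \<le> K" for k
  proof (cases k)
    case (Suc k')
    then have "k' < K" using that by simp
    then have "\<not> (par ^^ Suc k') i < i" unfolding K_def by (rule not_less_Least)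
    then show ?thesis using Suc by simp
  qed simp
  ultimately show thesis using that by auto
qed

lemma gap_top_beta:
  assumes "j \<in> {1..m}" "j = 1 \<or> par j < beta m par j"
  shows "gap_top par (beta m par j) = j"
proof -
  let ?i = "beta m par j"
  obtain K where K: "(par ^^ K) ?i = j" using desc_beta[OF assms(1)] unfolding desc_def by blast
  have "?i \<le> (par ^^ k) ?i" if "k \<le> K" for k
  proof -
    have "K = (K - k) + k" using that by simp
    then have "(par ^^ (K - k)) ((par ^^ k) ?i) = j" using K by (metis funpow_add comp_apply)
    then have "desc par ((par ^^ k) ?i) j" unfolding desc_def by blast
    then show ?thesis using beta_le_desc desc_in_range assms(1) by blast
  qed
  moreover have "par j < ?i" using assms(2) beta_in[OF assms(1)] by auto
  ultimately show ?thesis using gap_top_eqI K by blast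
qed

definition proper_heads :: "nat set" where
  "proper_heads = insert 1 {j\<in>{2..m}. \<not> beta m par j < par j}"

lemma proper_heads:
  assumes "m \<ge> 1" "j \<in> proper_heads"
  shows "j \<in> {1..m}" "j = 1 \<or> par j < beta m par j"
  using assms par_neq_beta unfolding proper_heads_def by (auto simp: nat_neq_iff)

text \<open>The leading vertices are exactly the minima \<open>beta j\<close> of the subtrees rooted at the root
  and at the heads \<open>j\<close> of the proper edges; \<open>gap_top\<close> recovers \<open>j\<close> from \<open>beta j\<close>.\<close>

lemma leading_iff_beta_proper_heads:
  assumes "i \<in> {1..m}"
  shows "leading m par i \<longleftrightarrow> i \<in> beta m par ` proper_heads"
proof
  assume lead: "leading m par i"
  obtain K where K: "\<forall>k\<le>K. i \<le> (par ^^ k) i" "par ((par ^^ K) i) < i"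
    using gap_top_exists assms by blast
  let ?a = "(par ^^ K) i"
  have top: "gap_top par i = ?a" using gap_top_eqI K by blast
  have "?a \<in> {1..m}" using K(1) assms funpow_par_le[of i K] by auto
  moreover have "beta m par ?a = i" using lead top unfolding leading_def by simp
  ultimately show "i \<in> beta m par ` proper_heads"
    using K(2) unfolding proper_heads_def by (intro image_eqI[of _ _ ?a]) auto
next
  assume "i \<in> beta m par ` proper_heads"
  then obtain j where j: "j \<in> proper_heads" "i = beta m par j" by blast
  have "m \<ge> 1" using assms by simp
  then have "gap_top par i = j" using gap_top_beta proper_heads j by blast
  then show "leading m par i" unfolding leading_def using j(2) by simp
qed

lemma lead_eq:
  assumes "m \<ge> 1"
  shows "lead m par = m - impe_C m par"
proof -
  let ?proper = "{j\<in>{2..m}. \<not> beta m par j < par j}"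
  let ?improper = "{j\<in>{2..m}. beta m par j < par j}"
  have "inj_on (beta m par) proper_heads"
    by (rule inj_on_inverseI[where g = "gap_top par"])
      (use gap_top_beta proper_heads assms in blast)
  moreover have "{i\<in>{1..m}. leading m par i} = beta m par ` proper_heads"
    using leading_iff_beta_proper_heads beta_in proper_heads assms by blast
  ultimately have "lead m par = card proper_heads"
    unfolding lead_def by (simp add: card_image)
  also have "\<dots> = Suc (card ?proper)" unfolding proper_heads_def by (rule card_insert_disjoint) auto
  also have "card ?proper = card {2..m} - impe_C m par"
  proof -
    have "card {2..m} = card (?proper \<union> ?improper)" by (rule arg_cong[of _ _ card]) auto
    also have "\<dots> = card ?proper + card ?improper" by (rule card_Un_disjoint) auto
    finally show ?thesis unfolding impe_C_def by simp
  qed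
  finally show ?thesis using assms impe_C_le[of m par] by simp
qed

end

section \<open>From planar trees to marked Cayley trees\<close>

definition improper_parents :: "nat \<Rightarrow> (nat \<Rightarrow> nat) \<Rightarrow> nat set" where
  "improper_parents m f = {i\<in>{1..m}. \<exists>j\<in>{2..m}. f j = i \<and> i > beta m f j}"

locale planar_tree = cayley_tree +
  fixes ord :: "nat \<Rightarrow> nat list"
  assumes distinct_ord: "v \<in> {1..m} \<Longrightarrow> distinct (ord v)"
    and set_ord: "v \<in> {1..m} \<Longrightarrow> set (ord v) = {j\<in>{2..m}. par j = v}"
    and ord_eq_Nil: "v \<notin> {1..m} \<Longrightarrow> ord v = []"
begin

definition pos :: "nat \<Rightarrow> nat" where
  "pos j = (THE i. i < length (ord (par j)) \<and> ord (par j) ! i = j)"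

definition elder_at :: "nat \<Rightarrow> nat \<Rightarrow> bool" where
  "elder_at v i \<longleftrightarrow>
     (\<exists>b. i < b \<and> b < length (ord v) \<and> beta m par (ord v ! b) < beta m par (ord v ! i))"

definition follows_elder :: "nat \<Rightarrow> bool" where
  "follows_elder j \<longleftrightarrow> j \<in> {2..m} \<and> 0 < pos j \<and> elder_at (par j) (pos j - 1)"

definition left_sibling :: "nat \<Rightarrow> nat" where
  "left_sibling j = ord (par j) ! (pos j - 1)"

definition right_sibling :: "nat \<Rightarrow> nat" where
  "right_sibling j = ord (par j) ! Suc (pos j)"

text \<open>Under \<open>phi_par\<close> a maximal run of elder siblings, together with the younger sibling
  that ends it, becomes a path hanging from their common parent.\<close>

definition phi_par :: "nat \<Rightarrow> nat" where
  "phi_par j = (if follows_elder j then left_sibling j else par j)"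

definition elders :: "nat set" where
  "elders = {j\<in>{1..m}. elder m par ord j}"

definition run_end :: "nat \<Rightarrow> nat \<Rightarrow> nat" where
  "run_end v i = (LEAST b. i \<le> b \<and> b < length (ord v) \<and> \<not> elder_at v b)"

definition run_start :: "nat \<Rightarrow> nat \<Rightarrow> nat" where
  "run_start v b = (LEAST s. s \<le> b \<and> (\<forall>c. s \<le> c \<longrightarrow> c < b \<longrightarrow> elder_at v c))"

lemma ord_nth:
  assumes "i < length (ord v)"
  shows "v \<in> {1..m}" "ord v ! i \<in> {2..m}" "par (ord v ! i) = v"
proof -
  show v: "v \<in> {1..m}" using assms ord_eq_Nil by fastforce
  have "ord v ! i \<in> set (ord v)" using assms by simp
  then show "ord v ! i \<in> {2..m}" "par (ord v ! i) = v" using set_ord[OF v] by auto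
qed

lemma pos_ord_nth:
  assumes "i < length (ord v)"
  shows "pos (ord v ! i) = i"
  unfolding pos_def ord_nth(3)[OF assms]
proof (rule the_equality)
  fix i' assume "i' < length (ord v) \<and> ord v ! i' = ord v ! i"
  then show "i' = i"
    using nth_eq_iff_index_eq[OF distinct_ord[OF ord_nth(1)[OF assms]]] assms by blast
qed (use assms in simp)

lemma pos_less: "j \<in> {2..m} \<Longrightarrow> pos j < length (ord (par j))"
  and ord_nth_pos: "j \<in> {2..m} \<Longrightarrow> ord (par j) ! pos j = j"
proof -
  assume j: "j \<in> {2..m}"
  then have "j \<in> set (ord (par j))" using set_ord par_in by auto
  then obtain i where i: "i < length (ord (par j))" "ord (par j) ! i = j"
    by (auto simp: in_set_conv_nth)
  then show "pos j < length (ord (par j))" "ord (par j) ! pos j = j"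
    using pos_ord_nth[OF i(1)] by auto
qed

lemma beta_ord_nth_inj:
  assumes "i < length (ord v)" "i' < length (ord v)" "i \<noteq> i'"
  shows "beta m par (ord v ! i) \<noteq> beta m par (ord v ! i')"
proof -
  have "ord v ! i \<noteq> ord v ! i'"
    using nth_eq_iff_index_eq[OF distinct_ord[OF ord_nth(1)[OF assms(1)]]] assms by blast
  then show ?thesis using beta_siblings_neq ord_nth[OF assms(1)] ord_nth[OF assms(2)] by simp
qed

lemma elder_iff_elder_at: "elder m par ord j \<longleftrightarrow> j \<in> {2..m} \<and> elder_at (par j) (pos j)"
proof
  assume "elder m par ord j"
  then obtain a b where j: "j \<in> {2..m}" and ab: "a < b" "b < length (ord (par j))"
    "ord (par j) ! a = j" "beta m par (ord (par j) ! b) < beta m par j"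
    unfolding elder_def by blast
  then have "pos j = a" using pos_ord_nth[of a "par j"] by simp
  then show "j \<in> {2..m} \<and> elder_at (par j) (pos j)" unfolding elder_at_def using j ab by auto
next
  assume "j \<in> {2..m} \<and> elder_at (par j) (pos j)"
  then show "elder m par ord j"
    unfolding elder_def elder_at_def using pos_less ord_nth_pos by metis
qed

lemma younger_iff_not_elder_at: "younger m par ord j \<longleftrightarrow> j \<in> {2..m} \<and> \<not> elder_at (par j) (pos j)"
  unfolding younger_def elder_iff_elder_at by auto

lemma beta_less_if_not_elder_at:
  assumes "\<not> elder_at v a" "a < b" "b < length (ord v)"
  shows "beta m par (ord v ! a) < beta m par (ord v ! b)"
  using assms beta_ord_nth_inj[of a v b] unfolding elder_at_def by fastforce

lemma elder_at_obtain_younger: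
  assumes "elder_at v c"
  obtains d where "c < d" "d < length (ord v)" "\<not> elder_at v d"
    "beta m par (ord v ! d) < beta m par (ord v ! c)"
proof -
  let ?D = "{c<..<length (ord v)}" and ?beta = "\<lambda>d. beta m par (ord v ! d)"
  obtain d where d: "d \<in> ?D" "?beta d = Min (?beta ` ?D)"
    using Min_in[of "?beta ` ?D"] assms unfolding elder_at_def by fastforce
  then have d_min: "?beta d \<le> ?beta d'" if "d' \<in> ?D" for d'
    using that by simp
  \<comment> \<open>the sibling with the smallest subtree minimum to the right of \<open>c\<close> is not elder\<close>
  have "\<not> elder_at v d"
  proof
    assume "elder_at v d"
    then obtain e where "d < e" "e < length (ord v)" "?beta e < ?beta d"
      unfolding elder_at_def by blast
    then show False using d(1) d_min[of e] by simp
  qed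
  moreover have "?beta d < ?beta c"
    using assms d_min unfolding elder_at_def by fastforce
  ultimately show thesis using that d(1) by auto
qed

lemma not_elder_at_last: "\<not> elder_at v (length (ord v) - 1)"
  unfolding elder_at_def by auto

lemma run_end:
  assumes "i < length (ord v)"
  shows "i \<le> run_end v i" "run_end v i < length (ord v)" "\<not> elder_at v (run_end v i)"
    "\<And>c. i \<le> c \<Longrightarrow> c < run_end v i \<Longrightarrow> elder_at v c"
proof -
  let ?P = "\<lambda>b. i \<le> b \<and> b < length (ord v) \<and> \<not> elder_at v b"
  have "?P (length (ord v) - 1)" using assms not_elder_at_last by auto
  then have "?P (run_end v i)" unfolding run_end_def by (rule LeastI)
  then show "i \<le> run_end v i" "run_end v i < length (ord v)" "\<not> elder_at v (run_end v i)"
    by auto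
  show "elder_at v c" if "i \<le> c" "c < run_end v i" for c
    using that \<open>?P (run_end v i)\<close> not_less_Least[of c ?P] unfolding run_end_def by force
qed

lemma run_end_eqI:
  assumes "i \<le> b" "b < length (ord v)" "\<not> elder_at v b" "\<And>c. i \<le> c \<Longrightarrow> c < b \<Longrightarrow> elder_at v c"
  shows "run_end v i = b"
proof -
  have i: "i < length (ord v)" using assms(1,2) by simp
  have "\<not> run_end v i < b" using run_end(3)[OF i] assms(4) run_end(1)[OF i] by blast
  moreover have "\<not> b < run_end v i" using run_end(4)[OF i] assms(1,3) by blast
  ultimately show ?thesis by simp
qed

lemma run_end_Suc:
  assumes "i < length (ord v)" "elder_at v i"
  shows "Suc i < length (ord v)" "run_end v (Suc i) = run_end v i"
proof -
  have "i \<noteq> run_end v i" using run_end(3)[OF assms(1)] assms(2) by auto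
  then have "i < run_end v i" using run_end(1)[OF assms(1)] by simp
  then show "Suc i < length (ord v)" using run_end(2)[OF assms(1)] by simp
  show "run_end v (Suc i) = run_end v i"
    by (rule run_end_eqI) (use \<open>i < run_end v i\<close> run_end[OF assms(1)] in auto)
qed

lemma beta_run_end_less:
  assumes "i < length (ord v)" "i \<le> c" "c < run_end v i"
  shows "beta m par (ord v ! run_end v i) < beta m par (ord v ! c)"
proof -
  obtain d where d: "c < d" "d < length (ord v)" "\<not> elder_at v d"
    "beta m par (ord v ! d) < beta m par (ord v ! c)"
    using elder_at_obtain_younger run_end(4)[OF assms] by blast
  have "run_end v i \<le> d" unfolding run_end_def using d assms by (intro Least_le) auto
  then show ?thesis
    using d beta_less_if_not_elder_at[of v "run_end v i" d] run_end[OF assms(1)]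
    by (cases "run_end v i = d") auto
qed

lemma beta_run_end_le:
  assumes "i < length (ord v)" "i \<le> c" "c \<le> run_end v i"
  shows "beta m par (ord v ! run_end v i) \<le> beta m par (ord v ! c)"
proof (cases "c = run_end v i")
  case False
  then show ?thesis using beta_run_end_less[OF assms(1,2)] assms(3) by simp
qed simp

lemma run_start:
  shows "run_start v b \<le> b" "\<And>c. run_start v b \<le> c \<Longrightarrow> c < b \<Longrightarrow> elder_at v c"
    "0 < run_start v b \<Longrightarrow> \<not> elder_at v (run_start v b - 1)"
proof -
  let ?P = "\<lambda>s. s \<le> b \<and> (\<forall>c. s \<le> c \<longrightarrow> c < b \<longrightarrow> elder_at v c)"
  have "?P b" by simp
  then have P: "?P (run_start v b)" unfolding run_start_def by (rule LeastI)
  then show "run_start v b \<le> b" "\<And>c. run_start v b \<le> c \<Longrightarrow> c < b \<Longrightarrow> elder_at v c" by blast+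
  assume pos: "0 < run_start v b"
  then have "run_start v b - 1 < run_start v b" by simp
  then have "\<not> ?P (run_start v b - 1)" unfolding run_start_def by (rule not_less_Least)
  moreover have "?P (run_start v b - 1)" if "elder_at v (run_start v b - 1)"
  proof (intro conjI allI impI)
    show "run_start v b - 1 \<le> b" using P by linarith
    fix c assume "run_start v b - 1 \<le> c" "c < b"
    then show "elder_at v c" using P that by (cases "c = run_start v b - 1") auto
  qed
  ultimately show "\<not> elder_at v (run_start v b - 1)" by blast
qed

lemma run_end_run_start:
  assumes "b < length (ord v)" "\<not> elder_at v b"
  shows "run_end v (run_start v b) = b"
  by (rule run_end_eqI) (use assms run_start[of v b] in auto)

lemma run_start_run_end:
  assumes "i < length (ord v)" "i = 0 \<or> \<not> elder_at v (i - 1)"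
  shows "run_start v (run_end v i) = i"
proof -
  have "run_start v (run_end v i) \<le> i"
    unfolding run_start_def using run_end[OF assms(1)] by (intro Least_le) auto
  moreover have "\<not> run_start v (run_end v i) < i"
  proof
    assume lt: "run_start v (run_end v i) < i"
    then have "elder_at v (i - 1)"
      using run_start(2)[of v "run_end v i" "i - 1"] run_end(1)[OF assms(1)] by simp
    then show False using assms(2) lt by simp
  qed
  ultimately show ?thesis by simp
qed

lemma left_sibling:
  assumes "follows_elder j"
  shows "par (left_sibling j) = par j" "pos (left_sibling j) = pos j - 1"
    "left_sibling j \<in> elders" "right_sibling (left_sibling j) = j"
proof -
  have j: "j \<in> {2..m}" "0 < pos j" "elder_at (par j) (pos j - 1)"
    using assms unfolding follows_elder_def by auto
  have l: "pos j - 1 < length (ord (par j))" using pos_less[OF j(1)] by simp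
  show par: "par (left_sibling j) = par j" and pos: "pos (left_sibling j) = pos j - 1"
    unfolding left_sibling_def using ord_nth[OF l] pos_ord_nth[OF l] by auto
  show "left_sibling j \<in> elders"
    unfolding elders_def elder_iff_elder_at using ord_nth(2)[OF l] j(3) par pos
    unfolding left_sibling_def by auto
  show "right_sibling (left_sibling j) = j"
    unfolding right_sibling_def using par pos j(2) ord_nth_pos[OF j(1)] by simp
qed

lemma right_sibling:
  assumes "e \<in> elders"
  shows "par (right_sibling e) = par e" "pos (right_sibling e) = Suc (pos e)"
    "follows_elder (right_sibling e)" "left_sibling (right_sibling e) = e"
proof -
  have e: "e \<in> {2..m}" "elder_at (par e) (pos e)"
    using assms unfolding elders_def elder_iff_elder_at by auto
  have l: "Suc (pos e) < length (ord (par e))" using run_end_Suc(1)[OF pos_less[OF e(1)] e(2)] .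
  show par: "par (right_sibling e) = par e" and pos: "pos (right_sibling e) = Suc (pos e)"
    unfolding right_sibling_def using ord_nth[OF l] pos_ord_nth[OF l] by auto
  show "follows_elder (right_sibling e)"
    unfolding follows_elder_def using ord_nth(2)[OF l] e(2) par pos
    unfolding right_sibling_def by auto
  show "left_sibling (right_sibling e) = e"
    unfolding left_sibling_def using par pos ord_nth_pos[OF e(1)] by simp
qed

lemma phi_par_ord_nth:
  assumes "i < length (ord v)"
  shows "phi_par (ord v ! i) = (if 0 < i \<and> elder_at v (i - 1) then ord v ! (i - 1) else v)"
  unfolding phi_par_def left_sibling_def follows_elder_def pos_ord_nth[OF assms]
  using ord_nth[OF assms] by auto

lemma phi_par_eq_0: "j \<notin> {2..m} \<Longrightarrow> phi_par j = 0"
  unfolding phi_par_def follows_elder_def using par_eq_0 by auto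

lemma phi_par_in:
  assumes "j \<in> {2..m}"
  shows "phi_par j \<in> {1..m}"
proof (cases "follows_elder j")
  case True
  then have "pos j - 1 < length (ord (par j))" using pos_less[OF assms] by simp
  then show ?thesis using True ord_nth(2) unfolding phi_par_def left_sibling_def by fastforce
next
  case False
  then show ?thesis using par_in[OF assms] unfolding phi_par_def by simp
qed

lemma desc_phi_par_run:
  assumes "i < length (ord v)" "i \<le> b" "b \<le> run_end v i"
  shows "desc phi_par (ord v ! b) (ord v ! i)"
  using assms(2,3)
proof (induction b rule: dec_induct)
  case (step b)
  then have "Suc b < length (ord v)" using run_end(2)[OF assms(1)] by simp
  moreover have "elder_at v b" using run_end(4)[OF assms(1)] step by simp
  ultimately have "phi_par (ord v ! Suc b) = ord v ! b" using phi_par_ord_nth by simp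
  then have "desc phi_par (ord v ! Suc b) (ord v ! b)" using desc_parent by metis
  moreover have "desc phi_par (ord v ! b) (ord v ! i)" using step by simp
  ultimately show ?case by (rule desc_trans)
qed simp

lemma desc_phi_par_ord_nth:
  assumes "i < length (ord v)"
  shows "desc phi_par (ord v ! i) v"
  using assms
proof (induction i)
  case 0
  then have "phi_par (ord v ! 0) = v" using phi_par_ord_nth by simp
  then show ?case using desc_parent by metis
next
  case (Suc i)
  show ?case
  proof (cases "elder_at v i")
    case True
    then have "phi_par (ord v ! Suc i) = ord v ! i" using phi_par_ord_nth[OF Suc.prems] by simp
    then have "desc phi_par (ord v ! Suc i) (ord v ! i)" using desc_parent by metis
    moreover have "desc phi_par (ord v ! i) v" using Suc by simp
    ultimately show ?thesis by (rule desc_trans)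
  next
    case False
    then have "phi_par (ord v ! Suc i) = v" using phi_par_ord_nth[OF Suc.prems] by simp
    then show ?thesis using desc_parent by metis
  qed
qed

lemma desc_phi_par_par: "desc phi_par u (par u)"
proof (cases "u \<in> {2..m}")
  case True
  then show ?thesis using desc_phi_par_ord_nth[OF pos_less[OF True]] ord_nth_pos[OF True] by simp
next
  case False
  then show ?thesis using phi_par_eq_0 par_eq_0 desc_parent[of phi_par u] by simp
qed

lemma desc_phi_par_if_desc: "desc par u w \<Longrightarrow> desc phi_par u w"
proof (induction rule: desc_induct)
  case (step u)
  then show ?case using desc_phi_par_par desc_trans by blast
qed simp

lemma follows_elder_in_run:
  assumes "follows_elder u" "left_sibling u = ord v ! b" "b \<le> run_end v i" "i < length (ord v)"
  shows "Suc b \<le> run_end v i" "ord v ! Suc b = u"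
proof -
  have b_less: "b < length (ord v)" using assms(3) run_end(2)[OF assms(4)] by simp
  have u: "u \<in> {2..m}" "0 < pos u" using assms(1) unfolding follows_elder_def by auto
  have "par u = v" using left_sibling(1)[OF assms(1)] assms(2) ord_nth(3)[OF b_less] by simp
  moreover have "pos u = Suc b"
    using left_sibling(2)[OF assms(1)] assms(2) pos_ord_nth[OF b_less] u(2) by simp
  moreover have "elder_at v b"
    using left_sibling(3)[OF assms(1)] assms(2) ord_nth[OF b_less] pos_ord_nth[OF b_less]
    unfolding elders_def elder_iff_elder_at by auto
  ultimately show "Suc b \<le> run_end v i" "ord v ! Suc b = u"
    using assms(3) run_end(3)[OF assms(4)] ord_nth_pos[OF u(1)] by (auto simp: le_less)
qed

lemma desc_phi_par_ord_nthD:
  assumes "desc phi_par u (ord v ! i)" "i < length (ord v)"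
  shows "\<exists>b. i \<le> b \<and> b \<le> run_end v i \<and> desc par u (ord v ! b)"
  using assms(1)
proof (induction rule: desc_induct)
  case refl
  then show ?case using run_end(1)[OF assms(2)] by (intro exI[of _ i]) simp
next
  case (step u)
  then obtain b where b: "i \<le> b" "b \<le> run_end v i" "desc par (phi_par u) (ord v ! b)" by blast
  show ?case
  proof (cases "follows_elder u")
    case False
    then have "phi_par u = par u" unfolding phi_par_def by simp
    then have "desc par u (ord v ! b)" using b(3) desc_parent desc_trans by metis
    then show ?thesis using b by blast
  next
    case True
    have d: "desc par (left_sibling u) (ord v ! b)" using b True unfolding phi_par_def by simp
    show ?thesis
    proof (cases "left_sibling u = ord v ! b")
      case False
      then have "desc par (par u) (ord v ! b)" using desc_step[OF d] left_sibling(1)[OF True]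
        by simp
      then have "desc par u (ord v ! b)" using desc_parent desc_trans by blast
      then show ?thesis using b by blast
    next
      case True
      then have "Suc b \<le> run_end v i" "ord v ! Suc b = u"
        using follows_elder_in_run[OF \<open>follows_elder u\<close> _ b(2) assms(2)] by simp_all
      then show ?thesis using b(1) by (intro exI[of _ "Suc b"]) auto
    qed
  qed
qed

lemma is_cayley_phi_par: "is_cayley m phi_par"
  unfolding is_cayley_def desc_def[symmetric]
  using phi_par_in phi_par_eq_0 desc_phi_par_if_desc desc_root by blast

sublocale phi: cayley_tree m phi_par
  by unfold_locales (rule is_cayley_phi_par)

lemma beta_phi_par_ord_nth:
  assumes "i < length (ord v)"
  shows "beta m phi_par (ord v ! i) = beta m par (ord v ! run_end v i)"
proof (rule phi.beta_eqI)
  let ?run = "\<lambda>u. \<exists>b. i \<le> b \<and> b \<le> run_end v i \<and> desc par u (ord v ! b)"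
  show "desc phi_par u (ord v ! i) \<longleftrightarrow> ?run u" for u
    using desc_phi_par_ord_nthD[OF _ assms] desc_phi_par_if_desc desc_phi_par_run[OF assms]
      desc_trans by meson
  have last: "run_end v i < length (ord v)" "i \<le> run_end v i" using run_end[OF assms] by auto
  show "beta m par (ord v ! run_end v i) \<in> {1..m}" using beta_in ord_nth[OF last(1)] by simp
  show "?run (beta m par (ord v ! run_end v i))"
    using desc_beta ord_nth[OF last(1)] last(2) by force
  show "beta m par (ord v ! run_end v i) \<le> u" if u: "u \<in> {1..m}" and run: "?run u" for u
  proof -
    obtain b where b: "i \<le> b" "b \<le> run_end v i" "desc par u (ord v ! b)" using run by blast
    then have "beta m par (ord v ! b) \<le> u" using beta_le_desc u by blast
    then show ?thesis using beta_run_end_le[OF assms b(1,2)] by simp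
  qed
qed

definition run_last :: "nat \<Rightarrow> nat" where
  "run_last j = ord (par j) ! run_end (par j) (pos j)"

definition run_first :: "nat \<Rightarrow> nat" where
  "run_first y = ord (par y) ! run_start (par y) (pos y)"

lemma run_last:
  assumes "j \<in> {2..m}"
  shows "run_last j \<in> {2..m}" "par (run_last j) = par j"
    "pos (run_last j) = run_end (par j) (pos j)"
    "beta m par (run_last j) = beta m phi_par j"
  using ord_nth run_end(2) pos_ord_nth beta_phi_par_ord_nth pos_less[OF assms] ord_nth_pos[OF assms]
  unfolding run_last_def by metis+

lemma run_first:
  assumes "y \<in> {2..m}"
  shows "par (run_first y) = par y" "pos (run_first y) = run_start (par y) (pos y)"
    "run_first y \<in> {2..m}"
proof -
  have "run_start (par y) (pos y) < length (ord (par y))"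
    using run_start(1) pos_less[OF assms] le_less_trans by blast
  then show "par (run_first y) = par y" "pos (run_first y) = run_start (par y) (pos y)"
    "run_first y \<in> {2..m}"
    unfolding run_first_def using ord_nth pos_ord_nth by auto
qed

text \<open>The run heads are the vertices that keep their parent under \<open>phi_par\<close>; each run
  ends in exactly one younger vertex.\<close>

lemma bij_betw_run_last:
  "bij_betw run_last {j\<in>{2..m}. \<not> follows_elder j} {y. younger m par ord y}"
proof (rule bij_betw_byWitness[where f' = run_first])
  show "\<forall>j\<in>{j\<in>{2..m}. \<not> follows_elder j}. run_first (run_last j) = j"
  proof safe
    fix j assume j: "j \<in> {2..m}" "\<not> follows_elder j"
    then have "run_start (par j) (run_end (par j) (pos j)) = pos j"
      using run_start_run_end pos_less unfolding follows_elder_def by auto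
    then show "run_first (run_last j) = j"
      unfolding run_first_def using run_last[OF j(1)] ord_nth_pos[OF j(1)] by simp
  qed
  show "\<forall>y\<in>{y. younger m par ord y}. run_last (run_first y) = y"
  proof safe
    fix y assume "younger m par ord y"
    then have y: "y \<in> {2..m}" "\<not> elder_at (par y) (pos y)"
      unfolding younger_iff_not_elder_at by auto
    then show "run_last (run_first y) = y"
      unfolding run_last_def using run_first[OF y(1)] run_end_run_start pos_less ord_nth_pos
      by simp
  qed
  show "run_last ` {j\<in>{2..m}. \<not> follows_elder j} \<subseteq> {y. younger m par ord y}"
    using run_last run_end(3) pos_less unfolding younger_iff_not_elder_at by auto
  show "run_first ` {y. younger m par ord y} \<subseteq> {j\<in>{2..m}. \<not> follows_elder j}"
    using run_first run_start(3) unfolding younger_def follows_elder_def by auto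
qed

lemma bij_betw_left_sibling: "bij_betw left_sibling {j. follows_elder j} elders"
  by (rule bij_betw_byWitness[where f' = right_sibling]) (use left_sibling right_sibling in auto)

lemma beta_phi_par_less_elder:
  assumes "e \<in> elders"
  shows "beta m phi_par e < beta m par e"
proof -
  have e: "e \<in> {2..m}" "elder_at (par e) (pos e)"
    using assms unfolding elders_def elder_iff_elder_at by auto
  note p = pos_less[OF e(1)]
  have "pos e \<noteq> run_end (par e) (pos e)" using run_end(3)[OF p] e(2) by auto
  then have "pos e < run_end (par e) (pos e)" using run_end(1)[OF p] by simp
  then show ?thesis
    using beta_run_end_less[OF p order_refl] beta_phi_par_ord_nth[OF p] ord_nth_pos[OF e(1)] by simp
qed

lemma beta_phi_par_left_sibling:
  assumes "follows_elder j"
  shows "beta m phi_par (left_sibling j) = beta m phi_par j"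
proof -
  have j: "j \<in> {2..m}" "0 < pos j" "elder_at (par j) (pos j - 1)"
    using assms unfolding follows_elder_def by auto
  have l: "pos j - 1 < length (ord (par j))" using pos_less[OF j(1)] by simp
  have "run_end (par j) (pos j) = run_end (par j) (pos j - 1)"
    using run_end_Suc(2)[OF l j(3)] j(2) by simp
  then show ?thesis
    using beta_phi_par_ord_nth[OF pos_less[OF j(1)]] beta_phi_par_ord_nth[OF l] ord_nth_pos[OF j(1)]
    unfolding left_sibling_def by simp
qed

lemma beta_par_le_beta_phi_par:
  assumes "u \<in> {2..m}"
  shows "beta m par (par u) \<le> beta m phi_par u"
proof -
  let ?r = "ord (par u) ! run_end (par u) (pos u)"
  have l: "run_end (par u) (pos u) < length (ord (par u))" using run_end(2)[OF pos_less[OF assms]] .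
  have "desc par ?r (par u)" using desc_parent[of par ?r] ord_nth(3)[OF l] by simp
  then have "beta m par (par u) \<le> beta m par ?r" using beta_mono ord_nth[OF l] by fastforce
  then show ?thesis using beta_phi_par_ord_nth[OF pos_less[OF assms]] ord_nth_pos[OF assms] by simp
qed

lemma follows_elder_improper:
  assumes "follows_elder j"
  shows "beta m phi_par j < phi_par j"
proof -
  have "beta m phi_par j = beta m phi_par (left_sibling j)"
    using beta_phi_par_left_sibling[OF assms] by simp
  also have "\<dots> < beta m par (left_sibling j)"
    using beta_phi_par_less_elder left_sibling(3)[OF assms] .
  also have "\<dots> \<le> left_sibling j"
    using beta_le left_sibling(3)[OF assms] unfolding elders_def by blast
  finally show ?thesis using assms unfolding phi_par_def by simp
qed

lemma card_elders: "card elders = eld m par ord"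
  unfolding eld_def elders_def ..

lemma impe_C_phi_par: "impe_C m phi_par = impe_O m par ord + eld m par ord"
proof -
  let ?F = "{j. follows_elder j}"
  let ?H = "{j\<in>{j\<in>{2..m}. \<not> follows_elder j}. beta m phi_par j < par j}"
  have "{j\<in>{2..m}. beta m phi_par j < phi_par j} = ?F \<union> ?H"
    using follows_elder_improper unfolding phi_par_def follows_elder_def by auto
  moreover have "finite ?F" by (rule finite_subset[of _ "{2..m}"]) (auto simp: follows_elder_def)
  ultimately have "impe_C m phi_par = card ?F + card ?H"
    unfolding impe_C_def by (simp only:) (rule card_Un_disjoint; auto)
  also have "card ?F = card elders"
    by (rule bij_betw_same_card[OF bij_betw_left_sibling])
  also have "card ?H = card {y\<in>{y. younger m par ord y}. beta m par y < par y}"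
    by (rule bij_betw_same_card[OF bij_betw_Collect[OF bij_betw_run_last]]) (simp add: run_last)
  also have "\<dots> = impe_O m par ord"
    unfolding impe_O_def younger_def by (intro arg_cong[of _ _ card]) auto
  finally show ?thesis using card_elders by simp
qed

lemma deg_root_phi_par: "deg_root m phi_par = young_root m par ord"
proof -
  have "phi_par j = 1 \<longleftrightarrow> \<not> follows_elder j \<and> par j = 1" if "j \<in> {2..m}" for j
  proof (cases "follows_elder j")
    case True
    then have "beta m phi_par j < phi_par j" by (rule follows_elder_improper)
    moreover have "beta m phi_par j \<ge> 1" using phi.beta_in that by fastforce
    ultimately show ?thesis using True by auto
  qed (simp add: phi_par_def)
  then have "deg_root m phi_par = card {j\<in>{j\<in>{2..m}. \<not> follows_elder j}. par j = 1}"
    unfolding deg_root_def by (intro arg_cong[of _ _ card]) auto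
  also have "\<dots> = card {y\<in>{y. younger m par ord y}. par y = 1}"
    by (rule bij_betw_same_card[OF bij_betw_Collect[OF bij_betw_run_last]]) (simp add: run_last)
  also have "\<dots> = young_root m par ord"
    unfolding young_root_def younger_def by (intro arg_cong[of _ _ card]) auto
  finally show ?thesis .
qed

lemma elders_improper_parents: "elders \<subseteq> improper_parents m phi_par"
proof
  fix e assume e: "e \<in> elders"
  then have "follows_elder (right_sibling e)" "phi_par (right_sibling e) = e"
    using right_sibling unfolding phi_par_def by auto
  then have "beta m phi_par (right_sibling e) < e" "right_sibling e \<in> {2..m}"
    using follows_elder_improper unfolding follows_elder_def by fastforce+
  then show "e \<in> improper_parents m phi_par"
    unfolding improper_parents_def using e \<open>phi_par (right_sibling e) = e\<close>
    unfolding elders_def by blast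
qed

end

section \<open>From marked Cayley trees to planar trees\<close>

lemma (in cayley_tree) improper_parents_in: "improper_parents m par \<subseteq> {2..m}"
proof
  fix i assume "i \<in> improper_parents m par"
  then obtain j where j: "i \<in> {1..m}" "j \<in> {2..m}" "beta m par j < i"
    unfolding improper_parents_def by blast
  moreover have "beta m par j \<ge> 1" using beta_in[of j] j(2) by auto
  ultimately show "i \<in> {2..m}" by auto
qed

locale marked_tree = cayley_tree +
  fixes S :: "nat set"
  assumes marked_improper: "S \<subseteq> improper_parents m par"
begin

lemma marked_in: "S \<subseteq> {2..m}"
  using marked_improper improper_parents_in by blast

text \<open>The inverse of \<open>phi_par\<close>: every maximal chain of chained vertices is unfolded into a
  run of consecutive siblings, all children of the parent of the top of the chain.\<close>

definition chained :: "nat \<Rightarrow> bool" where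
  "chained u \<longleftrightarrow> u \<in> {2..m} \<and> par u \<in> S \<and> beta m par u = beta m par (par u)"

definition chain_len :: "nat \<Rightarrow> nat" where
  "chain_len u = (LEAST k. \<not> chained ((par ^^ k) u))"

definition chain_top :: "nat \<Rightarrow> nat" where
  "chain_top u = (par ^^ chain_len u) u"

definition psi_par :: "nat \<Rightarrow> nat" where
  "psi_par u = (if u \<in> {2..m} then par (chain_top u) else 0)"

lemma chained_in: "chained u \<Longrightarrow> u \<in> {2..m} \<and> par u \<in> {2..m}"
  unfolding chained_def using marked_in by auto

lemma exists_not_chained: "\<exists>k. \<not> chained ((par ^^ k) u)"
proof (cases "u \<in> {1..m}")
  case True
  then obtain k where "(par ^^ k) u = 1" using reaches_root by blast
  then have "\<not> chained ((par ^^ k) u)" unfolding chained_def by simp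
  then show ?thesis by blast
next
  case False
  then have "\<not> chained ((par ^^ 0) u)" unfolding chained_def by auto
  then show ?thesis by blast
qed

lemma chain_top:
  shows "\<not> chained (chain_top u)" "\<And>k. k < chain_len u \<Longrightarrow> chained ((par ^^ k) u)"
    "desc par u (chain_top u)"
proof -
  let ?P = "\<lambda>k. \<not> chained ((par ^^ k) u)"
  obtain k0 where k0: "?P k0" using exists_not_chained by blast
  show "\<not> chained (chain_top u)" unfolding chain_top_def chain_len_def using LeastI[of ?P, OF k0] .
  show "\<And>k. k < chain_len u \<Longrightarrow> chained ((par ^^ k) u)"
    unfolding chain_len_def using not_less_Least[of _ ?P] by blast
  show "desc par u (chain_top u)" unfolding chain_top_def desc_def by blast
qed

lemma chain_top_not_chained: "\<not> chained u \<Longrightarrow> chain_top u = u"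
  unfolding chain_top_def chain_len_def by (subst Least_eq_0) simp_all

lemma chain_top_chained:
  assumes "chained u"
  shows "chain_top u = chain_top (par u)" "chain_len u = Suc (chain_len (par u))"
proof -
  let ?P = "\<lambda>k. \<not> chained ((par ^^ k) u)"
  obtain k0 where k0: "?P k0" using exists_not_chained by blast
  have "chain_len u = Suc (LEAST k. ?P (Suc k))" unfolding chain_len_def
    by (rule Least_Suc[of ?P, OF k0]) (use assms in simp)
  moreover have "(\<lambda>k. ?P (Suc k)) = (\<lambda>k. \<not> chained ((par ^^ k) (par u)))"
    by (simp add: funpow_Suc_right del: funpow.simps)
  ultimately show len: "chain_len u = Suc (chain_len (par u))" unfolding chain_len_def by simp
  show "chain_top u = chain_top (par u)"
    unfolding chain_top_def len by (simp add: funpow_Suc_right del: funpow.simps)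
qed

lemma chain_top_in: "u \<in> {2..m} \<Longrightarrow> chain_top u \<in> {2..m}"
proof (induction "chain_len u" arbitrary: u)
  case 0
  then show ?case unfolding chain_top_def by simp
next
  case (Suc k)
  then have "chained u" using chain_top(2)[of 0 u] by simp
  then show ?case using chain_top_chained Suc chained_in by simp
qed

lemma beta_chain_top: "u \<in> {2..m} \<Longrightarrow> beta m par (chain_top u) = beta m par u"
proof (induction "chain_len u" arbitrary: u)
  case 0
  then show ?case unfolding chain_top_def by simp
next
  case (Suc k)
  then have "chained u" using chain_top(2)[of 0 u] by simp
  then show ?case using chain_top_chained Suc chained_in unfolding chained_def by simp
qed

lemma chain_top_in_range:
  assumes "u \<in> {1..m}"
  shows "chain_top u \<in> {1..m}"
proof (cases "chained u")
  case True
  then have "u \<in> {2..m}" using chained_in by blast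
  then show ?thesis using chain_top_in by fastforce
qed (use assms chain_top_not_chained in simp)

lemma depth_chain_top:
  assumes "u \<in> {1..m}"
  shows "depth u = depth (chain_top u) + chain_len u"
proof -
  have "(par ^^ (depth (chain_top u) + chain_len u)) u = 1"
    using funpow_depth[OF chain_top_in_range[OF assms]] unfolding chain_top_def
    by (simp add: funpow_add)
  then show ?thesis using depth_unique assms by metis
qed

lemma psi_par_in: "u \<in> {2..m} \<Longrightarrow> psi_par u \<in> {1..m}"
  unfolding psi_par_def using chain_top_in par_in by auto

lemma psi_par_eq_0: "u \<notin> {2..m} \<Longrightarrow> psi_par u = 0"
  unfolding psi_par_def by auto

lemma desc_psi_par: "desc par u (psi_par u)"
proof (cases "u \<in> {2..m}")
  case True
  then show ?thesis unfolding psi_par_def using desc_trans[OF chain_top(3) desc_parent] by simp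
next
  case False
  then have "psi_par u = par u" using psi_par_eq_0 par_eq_0 by simp
  then show ?thesis using desc_parent by metis
qed

lemma depth_psi_par_less:
  assumes "u \<in> {2..m}"
  shows "depth (psi_par u) < depth u"
proof -
  have "chain_top u \<in> {2..m}" using chain_top_in assms by blast
  then have "depth (psi_par u) < depth (chain_top u)" unfolding psi_par_def using assms depth_par
    by simp
  also have "\<dots> \<le> depth u" using depth_chain_top[of u] assms by simp
  finally show ?thesis .
qed

lemma is_cayley_psi_par: "is_cayley m psi_par"
  unfolding is_cayley_def
proof (intro conjI ballI allI impI)
  fix v assume "v \<in> {1..m}"
  then show "\<exists>k. (psi_par ^^ k) v = 1"
  proof (induction "depth v" arbitrary: v rule: less_induct)
    case less
    show ?case
    proof (cases "v = 1")
      case False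
      then have v: "v \<in> {2..m}" using less.prems by auto
      then obtain k where "(psi_par ^^ k) (psi_par v) = 1"
        using less.hyps[of "psi_par v"] depth_psi_par_less psi_par_in by blast
      then have "(psi_par ^^ Suc k) v = 1" by (simp add: funpow_Suc_right del: funpow.simps)
      then show ?thesis by blast
    qed (intro exI[of _ 0], simp)
  qed
qed (use psi_par_in psi_par_eq_0 in auto)

sublocale psi: cayley_tree m psi_par
  by unfold_locales (rule is_cayley_psi_par)

lemma chain_index:
  assumes "u \<in> {1..m}" "desc par u a" "desc par a (chain_top u)"
  shows "\<exists>i\<le>chain_len u. a = (par ^^ i) u"
proof -
  obtain i where i: "(par ^^ i) u = a" using assms(2) unfolding desc_def by blast
  obtain k where k: "(par ^^ k) a = chain_top u" using assms(3) unfolding desc_def by blast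
  have "(par ^^ (k + i)) u = (par ^^ chain_len u) u"
    using i k unfolding chain_top_def by (simp add: funpow_add)
  moreover have "(par ^^ chain_len u) u \<ge> 1"
    using chain_top_in_range[OF assms(1)] unfolding chain_top_def by simp
  ultimately have "chain_len u \<le> k + i \<Longrightarrow> chain_len u = k + i"
    using funpow_par_inj by metis
  then have "i \<le> chain_len u" by linarith
  then show ?thesis using i by blast
qed

lemma chained_child_on_chain:
  assumes "u \<in> {1..m}" "desc par u a" "desc par a (chain_top u)" "a \<noteq> u"
  shows "\<exists>w. chained w \<and> par w = a \<and> desc par u w"
proof -
  obtain i where i: "i \<le> chain_len u" "a = (par ^^ i) u" using chain_index assms(1-3) by blast
  with assms(4) obtain i' where i': "i = Suc i'" by (cases i) auto
  then have "chained ((par ^^ i') u)" "par ((par ^^ i') u) = a" using chain_top(2) i by auto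
  moreover have "desc par u ((par ^^ i') u)" unfolding desc_def by blast
  ultimately show ?thesis by blast
qed

lemma chained_siblings_eq: "chained a \<Longrightarrow> chained b \<Longrightarrow> par a = par b \<Longrightarrow> a = b"
  using beta_siblings_neq chained_in unfolding chained_def by metis

lemma chains_eq:
  "(par ^^ k) a = (par ^^ k) b \<Longrightarrow> \<forall>i<k. chained ((par ^^ i) a) \<Longrightarrow> \<forall>i<k. chained ((par ^^ i) b)
    \<Longrightarrow> a = b"
proof (induction k arbitrary: a b)
  case (Suc k)
  have "(par ^^ k) (par a) = (par ^^ k) (par b)"
    using Suc.prems(1) by (simp add: funpow_Suc_right del: funpow.simps)
  moreover have "\<forall>i<k. chained ((par ^^ i) (par a))" "\<forall>i<k. chained ((par ^^ i) (par b))"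
    using Suc.prems(2,3) by (auto simp: funpow_Suc_right simp del: funpow.simps)
  ultimately have "par a = par b" using Suc.IH by blast
  moreover have "chained a" "chained b" using Suc.prems(2,3) by (metis funpow_0 zero_less_Suc)+
  ultimately show ?case using chained_siblings_eq by blast
qed simp

text \<open>The minimum of a marked vertex \<open>j\<close> lies strictly below \<open>j\<close>; the child of \<open>j\<close> on the path
  from that minimum up to \<open>j\<close> is chained.\<close>

lemma marked_has_chained_child:
  assumes "j \<in> S"
  obtains w where "chained w" "par w = j"
proof -
  obtain c where c: "c \<in> {2..m}" "par c = j" "beta m par c < j"
    using assms marked_improper unfolding improper_parents_def by blast
  have j: "j \<in> {1..m}" using assms marked_in by auto
  let ?x = "beta m par j"
  have "?x \<le> beta m par c" using beta_mono[of c j] c j desc_parent by fastforce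
  then have "?x \<noteq> j" using c by simp
  moreover obtain i where i: "(par ^^ i) ?x = j" using desc_beta[OF j] unfolding desc_def by blast
  ultimately obtain i' where i': "i = Suc i'" by (cases i) auto
  let ?a = "(par ^^ i') ?x"
  have pa: "par ?a = j" using i i' by simp
  then have a: "?a \<in> {2..m}" using j par_eq_0 by fastforce
  have "desc par ?x ?a" unfolding desc_def by blast
  then have "beta m par ?a \<le> ?x" using beta_le_desc beta_in[OF j] by blast
  moreover have "desc par ?a j" using desc_parent[of par ?a] pa by simp
  then have "?x \<le> beta m par ?a" using beta_mono[of ?a j] a j by auto
  ultimately have "chained ?a" unfolding chained_def using a pa assms by simp
  then show thesis using that pa by blast
qed

lemma desc_psi_par_desc: "desc psi_par u j \<Longrightarrow> desc par u j"
proof (induction rule: desc_induct)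
  case (step u)
  then show ?case using desc_psi_par desc_trans by blast
qed simp

lemma desc_psi_par_not_below_chained:
  assumes "desc psi_par u j" "j \<in> {1..m}"
  shows "\<not> (\<exists>w. chained w \<and> par w = j \<and> desc par u w)"
  using assms(1)
proof (induction rule: desc_induct)
  case refl
  then show ?case using not_desc_par chained_in by blast
next
  case (step u)
  let ?q = "psi_par u"
  show ?case
  proof
    assume "\<exists>w. chained w \<and> par w = j \<and> desc par u w"
    then obtain w where w: "chained w" "par w = j" "desc par u w" by blast
    have u: "u \<in> {2..m}"
      using step.hyps(1) psi_par_eq_0[of u] psi.desc_0 assms(2) by fastforce
    have "desc par ?q j" using step.hyps(1) desc_psi_par_desc by blast
    from desc_linear[OF desc_psi_par w(3)] show False
    proof
      assume "desc par w ?q"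
      then have "?q = w \<or> ?q = j"
        using desc_between_parent \<open>desc par ?q j\<close> w(2) chained_in[OF w(1)] by blast
      then show False
      proof
        assume "?q = j"
        \<comment> \<open>then \<open>chain_top u\<close> and \<open>w\<close> are siblings above \<open>u\<close>, so they coincide\<close>
        then have "par (chain_top u) = par w" using u w(2) unfolding psi_par_def by simp
        then have "chain_top u = w"
          using siblings_no_common_desc chain_top_in[OF u] chained_in[OF w(1)] chain_top(3) w(3)
          by blast
        then show False using chain_top(1)[of u] w(1) by simp
      qed (use step.IH w in auto)
    qed (use step.IH w in blast)
  qed
qed

lemma desc_psi_parI:
  assumes "u \<in> {1..m}" "desc par u j" "\<not> (\<exists>w. chained w \<and> par w = j \<and> desc par u w)"
    "j \<in> {1..m}"
  shows "desc psi_par u j"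
  using assms
proof (induction "depth u" arbitrary: u rule: less_induct)
  case less
  show ?case
  proof (cases "u = j")
    case False
    then have u: "u \<in> {2..m}"
      using less.prems desc_step[of par u j] desc_0 by (cases "u = 1") fastforce+
    have "chain_top u \<noteq> j \<and> desc par (chain_top u) j"
      using desc_linear[OF chain_top(3) less.prems(2)] chained_child_on_chain less.prems False
      by (metis desc_refl)
    then have "desc par (psi_par u) j" using desc_step u unfolding psi_par_def by simp
    moreover have "\<not> (\<exists>w. chained w \<and> par w = j \<and> desc par (psi_par u) w)"
      using less.prems(3) desc_psi_par desc_trans by blast
    ultimately have "desc psi_par (psi_par u) j"
      using less.hyps[OF depth_psi_par_less[OF u]] psi_par_in[OF u] less.prems(4) by blast
    then show ?thesis using desc_parent desc_trans by metis
  qed simp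
qed

lemma desc_psi_par_iff:
  assumes "u \<in> {1..m}" "j \<in> {1..m}"
  shows "desc psi_par u j \<longleftrightarrow> desc par u j \<and> \<not> (\<exists>w. chained w \<and> par w = j \<and> desc par u w)"
proof
  assume "desc psi_par u j"
  then show "desc par u j \<and> \<not> (\<exists>w. chained w \<and> par w = j \<and> desc par u w)"
    using desc_psi_par_desc desc_psi_par_not_below_chained assms(2) by simp
qed (use desc_psi_parI assms in blast)

lemma beta_le_beta_psi:
  assumes "j \<in> {1..m}"
  shows "beta m par j \<le> beta m psi_par j"
  by (rule beta_le_desc[OF psi.beta_in[OF assms] desc_psi_par_desc[OF psi.desc_beta[OF assms]]])

lemma beta_psi_unmarked:
  assumes "j \<in> {1..m}" "j \<notin> S"
  shows "beta m psi_par j = beta m par j"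
proof -
  have "desc psi_par u j \<longleftrightarrow> desc par u j" if "u \<in> {1..m}" for u
    using desc_psi_par_iff[OF that assms(1)] assms(2) unfolding chained_def by auto
  then have "{u\<in>{1..m}. desc psi_par u j} = {u\<in>{1..m}. desc par u j}" by blast
  then show ?thesis unfolding beta_def by simp
qed

lemma beta_less_beta_psi_marked:
  assumes "j \<in> S"
  shows "beta m par j < beta m psi_par j"
proof -
  have j: "j \<in> {1..m}" using marked_in assms by auto
  obtain w where w: "chained w" "par w = j" using marked_has_chained_child assms by blast
  then have "beta m par w = beta m par j" "w \<in> {2..m}" using chained_def by auto
  then have "desc par (beta m par j) w" using desc_beta[of w] by auto
  then have "\<not> desc psi_par (beta m par j) j"
    using desc_psi_par_iff[OF beta_in[OF j] j] w by blast
  then have "beta m psi_par j \<noteq> beta m par j" using psi.desc_beta[OF j] by auto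
  then show ?thesis using beta_le_beta_psi[OF j] by simp
qed

definition psi_children :: "nat \<Rightarrow> nat set" where
  "psi_children v = {j\<in>{2..m}. psi_par j = v}"

text \<open>The vertices of one unfolded chain share their subtree minimum; the depth orders them
  from top to bottom.\<close>

definition sibling_key :: "nat \<Rightarrow> nat \<times> nat" where
  "sibling_key u = (beta m par u, depth u)"

definition psi_ord :: "nat \<Rightarrow> nat list" where
  "psi_ord v =
     (if v \<in> {1..m} then sort_key sibling_key (sorted_list_of_set (psi_children v)) else [])"

lemma psi_children:
  assumes "j \<in> psi_children v"
  shows "j \<in> {2..m}" "chain_top j \<in> {2..m}" "par (chain_top j) = v"
proof -
  show j: "j \<in> {2..m}" using assms unfolding psi_children_def by blast
  then show "chain_top j \<in> {2..m}" by (rule chain_top_in)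
  show "par (chain_top j) = v" using assms unfolding psi_children_def psi_par_def
    by (simp split: if_splits)
qed

lemma chained_psi_par:
  assumes "chained w"
  shows "psi_par w = psi_par (par w)" "depth w = Suc (depth (par w))"
proof -
  have "w \<in> {2..m}" "par w \<in> {2..m}" using chained_in[OF assms] by auto
  then show "psi_par w = psi_par (par w)" "depth w = Suc (depth (par w))"
    using chain_top_chained(1)[OF assms] depth_par unfolding psi_par_def by auto
qed

lemma sibling_key_par_less: "chained w \<Longrightarrow> sibling_key (par w) < sibling_key w"
  using chained_psi_par unfolding sibling_key_def chained_def by simp

lemma chain_top_eq_if_beta_eq:
  assumes "j1 \<in> psi_children v" "j2 \<in> psi_children v" "beta m par j1 = beta m par j2"
  shows "chain_top j1 = chain_top j2"
  using beta_siblings_neq[OF psi_children(2)[OF assms(1)] psi_children(2)[OF assms(2)]]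
    psi_children[OF assms(1)] psi_children[OF assms(2)] beta_chain_top assms(3) by metis

lemma desc_if_same_chain_top:
  assumes "j \<in> {2..m}" "s \<in> {2..m}" "chain_top s = chain_top j" "chain_len j \<le> chain_len s"
  shows "desc par s j"
proof -
  let ?d = "chain_len s - chain_len j"
  let ?s' = "(par ^^ ?d) s"
  have "(par ^^ chain_len j) ?s' = (par ^^ (chain_len j + ?d)) s" by (simp add: funpow_add)
  also have "chain_len j + ?d = chain_len s" using assms(4) by simp
  finally have "(par ^^ chain_len j) ?s' = (par ^^ chain_len j) j"
    using assms(3) unfolding chain_top_def by simp
  moreover have "\<forall>i<chain_len j. chained ((par ^^ i) ?s')"
  proof (intro allI impI)
    fix i assume "i < chain_len j"
    then have "i + ?d < chain_len s" using assms(4) by simp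
    then have "chained ((par ^^ (i + ?d)) s)" by (rule chain_top(2))
    then show "chained ((par ^^ i) ?s')" by (simp add: funpow_add)
  qed
  ultimately have "?s' = j" using chains_eq chain_top(2) by blast
  then show ?thesis unfolding desc_def by blast
qed

lemma same_key_same_chain:
  assumes "j \<in> psi_children v" "s \<in> psi_children v" "beta m par j = beta m par s"
    "depth j \<le> depth s"
  shows "desc par s j"
proof -
  have "chain_top s = chain_top j" using chain_top_eq_if_beta_eq assms by metis
  moreover have "depth j = depth (chain_top j) + chain_len j"
    "depth s = depth (chain_top s) + chain_len s"
    using depth_chain_top[of j] depth_chain_top[of s] psi_children(1)[OF assms(1)]
      psi_children(1)[OF assms(2)] by auto
  then have "chain_len j \<le> chain_len s" using assms(4) calculation by simp
  ultimately show ?thesis using desc_if_same_chain_top psi_children(1) assms(1,2) by blast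
qed

lemma inj_on_sibling_key: "inj_on sibling_key (psi_children v)"
proof (rule inj_onI)
  fix j1 j2 assume j: "j1 \<in> psi_children v" "j2 \<in> psi_children v" "sibling_key j1 = sibling_key j2"
  then have "desc par j1 j2" "desc par j2 j1" using same_key_same_chain unfolding sibling_key_def
    by auto
  then show "j1 = j2" using desc_antisym psi_children(1)[OF j(1)] by auto
qed

lemma psi_ord:
  assumes "v \<in> {1..m}"
  shows "set (psi_ord v) = psi_children v" "distinct (psi_ord v)"
    "sorted_wrt (<) (map sibling_key (psi_ord v))"
proof -
  have fin: "finite (psi_children v)" unfolding psi_children_def by simp
  show set: "set (psi_ord v) = psi_children v" and dist: "distinct (psi_ord v)"
    unfolding psi_ord_def using assms fin by auto
  have "distinct (map sibling_key (psi_ord v))" using dist inj_on_sibling_key set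
    by (simp add: distinct_map)
  moreover have "sorted (map sibling_key (psi_ord v))" unfolding psi_ord_def using assms by simp
  ultimately show "sorted_wrt (<) (map sibling_key (psi_ord v))" using strict_sorted_iff by blast
qed

lemma planar_tree_psi: "planar_tree m psi_par psi_ord"
proof unfold_locales
  fix v assume "v \<in> {1..m}"
  then show "distinct (psi_ord v)" "set (psi_ord v) = {j\<in>{2..m}. psi_par j = v}"
    using psi_ord unfolding psi_children_def by auto
qed (auto simp: psi_ord_def)

sublocale psi: planar_tree m psi_par psi_ord
  by (rule planar_tree_psi)

lemma sibling_key_psi_ord_less_iff:
  assumes "v \<in> {1..m}" "i < length (psi_ord v)" "k < length (psi_ord v)"
  shows "sibling_key (psi_ord v ! i) < sibling_key (psi_ord v ! k) \<longleftrightarrow> i < k"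
proof -
  have "sibling_key (psi_ord v ! i) < sibling_key (psi_ord v ! k)"
    if "i < k" "k < length (psi_ord v)"
    for i k
    using sorted_wrt_nth_less[OF psi_ord(3)[OF assms(1)]] that by simp
  then show ?thesis using assms(2,3) by (metis less_asym' less_irrefl linorder_neqE_nat)
qed

lemma sibling_key_less_iff_pos_less:
  assumes "a \<in> {2..m}" "b \<in> {2..m}" "psi_par a = psi_par b"
  shows "sibling_key a < sibling_key b \<longleftrightarrow> psi.pos a < psi.pos b"
  using sibling_key_psi_ord_less_iff[OF psi_par_in[OF assms(1)]] psi.pos_less psi.ord_nth_pos assms
  by metis

text \<open>A marked vertex \<open>j\<close> is elder in the new tree: its right sibling at the bottom of the chain
  hanging below \<open>j\<close> keeps the minimum of \<open>j\<close>'s old subtree, while \<open>j\<close> has lost it.\<close>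

lemma marked_elder_psi:
  assumes "j \<in> S"
  shows "elder m psi_par psi_ord j"
proof -
  have j: "j \<in> {2..m}" using assms marked_in by blast
  let ?X = "{s \<in> psi_children (psi_par j). chain_top s = chain_top j \<and> depth j < depth s}"
  have finX: "finite ?X" unfolding psi_children_def by simp
  obtain w where w: "chained w" "par w = j" using marked_has_chained_child assms by blast
  then have "w \<in> ?X"
    using chained_psi_par[OF w(1)] chain_top_chained[OF w(1)] chained_in[OF w(1)]
    unfolding psi_children_def by auto
  then have "Max (depth ` ?X) \<in> depth ` ?X" using finX by (intro Max_in) auto
  then obtain s where s: "s \<in> ?X" "depth s = Max (depth ` ?X)" by auto
  have s_max: "depth s' \<le> depth s" if "s' \<in> ?X" for s' using s(2) finX that by simp
  have s2: "s \<in> {2..m}" using s(1) psi_children(1) by blast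
  have "s \<notin> S"
  proof
    assume "s \<in> S"
    then obtain w' where w': "chained w'" "par w' = s" using marked_has_chained_child by blast
    then have "w' \<in> ?X"
      using chained_psi_par[OF w'(1)] chain_top_chained[OF w'(1)] chained_in[OF w'(1)] s(1)
      unfolding psi_children_def by auto
    then have "depth w' \<le> depth s" by (rule s_max)
    then show False using chained_psi_par(2)[OF w'(1)] w'(2) by simp
  qed
  have "beta m par s = beta m par j"
    using beta_chain_top[OF s2] beta_chain_top[OF j] s(1) by simp
  then have "beta m psi_par s < beta m psi_par j"
    using beta_psi_unmarked[of s] s2 \<open>s \<notin> S\<close> beta_less_beta_psi_marked[OF assms] by simp
  moreover have "sibling_key j < sibling_key s"
    using s(1) \<open>beta m par s = beta m par j\<close> unfolding sibling_key_def by simp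
  then have "psi.pos j < psi.pos s"
    using sibling_key_less_iff_pos_less[OF j s2] s(1) unfolding psi_children_def by simp
  moreover have "psi_par s = psi_par j" using s(1) unfolding psi_children_def by simp
  ultimately show ?thesis
    unfolding elder_def using j psi.pos_less[OF s2] psi.ord_nth_pos[OF s2] psi.ord_nth_pos[OF j]
    by (intro conjI exI[of _ "psi.pos j"] exI[of _ "psi.pos s"]) auto
qed

lemma elder_psi_marked:
  assumes "j \<in> {2..m}" "elder m psi_par psi_ord j"
  shows "j \<in> S"
proof (rule ccontr)
  assume "j \<notin> S"
  let ?v = "psi_par j"
  have "psi.elder_at ?v (psi.pos j)" using assms(2) psi.elder_iff_elder_at by blast
  then obtain b where b: "psi.pos j < b" "b < length (psi_ord ?v)"
    "beta m psi_par (psi_ord ?v ! b) < beta m psi_par j"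
    using psi.ord_nth_pos[OF assms(1)] unfolding psi.elder_at_def by auto
  let ?s = "psi_ord ?v ! b"
  have s: "?s \<in> psi_children ?v" using psi_ord(1) psi_par_in[OF assms(1)] b(2) nth_mem by blast
  have j: "j \<in> psi_children ?v" using assms(1) unfolding psi_children_def by simp
  have less: "beta m psi_par ?s < beta m par j"
    using b(3) beta_psi_unmarked \<open>j \<notin> S\<close> assms(1) by simp
  have "sibling_key j < sibling_key ?s"
    using sibling_key_less_iff_pos_less[OF assms(1) psi_children(1)[OF s]] b(1)
      psi.pos_ord_nth[OF b(2)]
      s unfolding psi_children_def by simp
  then consider "beta m par j < beta m par ?s"
    | "beta m par j = beta m par ?s" "depth j < depth ?s"
    unfolding sibling_key_def by fastforce
  then show False
  proof cases
    case 1
    then show False using less beta_le_beta_psi[of ?s] psi_children(1)[OF s] by fastforce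
  next
    case 2
    \<comment> \<open>then \<open>?s\<close> lies on the chain below \<open>j\<close>, so \<open>j\<close> has a chained child and is marked\<close>
    then have "desc par ?s j" using same_key_same_chain[OF j s] by simp
    moreover have "desc par j (chain_top ?s)"
      using chain_top_eq_if_beta_eq[OF j s 2(1)] chain_top(3)[of j] by simp
    moreover have "j \<noteq> ?s" using 2 by auto
    moreover have "?s \<in> {1..m}" using psi_children(1)[OF s] by auto
    ultimately obtain w where "chained w" "par w = j" using chained_child_on_chain by blast
    then show False using \<open>j \<notin> S\<close> unfolding chained_def by simp
  qed
qed

lemma elders_psi: "psi.elders = S"
proof -
  have "elder m psi_par psi_ord j \<longleftrightarrow> j \<in> S" for j
  proof
    assume "elder m psi_par psi_ord j"
    moreover from this have "j \<in> {2..m}" using psi.elder_iff_elder_at by blast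
    ultimately show "j \<in> S" using elder_psi_marked by blast
  qed (rule marked_elder_psi)
  then show ?thesis unfolding psi.elders_def using marked_in by auto
qed

lemma left_sibling_psi_chained:
  assumes "chained j"
  shows "psi.follows_elder j" "psi.left_sibling j = par j"
proof -
  let ?w = "par j" and ?v = "psi_par j"
  have j: "j \<in> {2..m}" "?w \<in> {2..m}" using chained_in[OF assms] by auto
  have same_par: "psi_par ?w = ?v" using chained_psi_par(1)[OF assms] by simp
  have "psi.pos ?w < psi.pos j"
    using sibling_key_par_less[OF assms] sibling_key_less_iff_pos_less[OF j(2,1) same_par] by simp
  moreover have "\<not> psi.pos ?w < psi.pos j - 1"
  proof
    assume lt: "psi.pos ?w < psi.pos j - 1"
    let ?e = "psi_ord ?v ! (psi.pos j - 1)"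
    have l: "psi.pos j - 1 < length (psi_ord ?v)" using psi.pos_less[OF j(1)] by simp
    note e = psi.ord_nth[OF l] psi.pos_ord_nth[OF l]
    \<comment> \<open>no key fits strictly between those of \<open>par j\<close> and \<open>j\<close>\<close>
    have "sibling_key ?w < sibling_key ?e" "sibling_key ?e < sibling_key j"
      using sibling_key_less_iff_pos_less[OF j(2) e(2)] sibling_key_less_iff_pos_less[OF e(2) j(1)]
        same_par e lt by auto
    then show False
      using chained_psi_par(2)[OF assms] assms unfolding sibling_key_def chained_def by auto
  qed
  ultimately have pos: "psi.pos ?w = psi.pos j - 1" "0 < psi.pos j" by auto
  have "elder m psi_par psi_ord ?w" using marked_elder_psi assms unfolding chained_def by blast
  then have "psi.elder_at ?v (psi.pos j - 1)" using psi.elder_iff_elder_at same_par pos by simp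
  then show "psi.follows_elder j" unfolding psi.follows_elder_def using j pos by simp
  show "psi.left_sibling j = ?w"
    unfolding psi.left_sibling_def using pos psi.ord_nth_pos[OF j(2)] same_par by simp
qed

lemma not_follows_elder_psi:
  assumes "j \<in> {2..m}" "\<not> chained j"
  shows "\<not> psi.follows_elder j"
proof
  assume f: "psi.follows_elder j"
  let ?v = "psi_par j" and ?e = "psi.left_sibling j"
  note e = psi.left_sibling[OF f]
  have e2: "?e \<in> {2..m}" using e(3) unfolding psi.elders_def psi.elder_iff_elder_at by blast
  have p0: "0 < psi.pos j" using f unfolding psi.follows_elder_def by simp
  have "?e \<in> S" using e(3) elders_psi by simp
  then obtain c where c: "chained c" "par c = ?e" using marked_has_chained_child by blast
  have c2: "c \<in> {2..m}" using chained_in[OF c(1)] by blast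
  have same_par: "psi_par c = ?v" "psi_par ?e = ?v" using chained_psi_par(1)[OF c(1)] c(2) e(1)
    by simp_all
  have "sibling_key ?e < sibling_key j"
    using sibling_key_less_iff_pos_less[OF e2 assms(1)] same_par e(2) p0 by simp
  moreover have "c \<noteq> j" using c(1) assms(2) by blast
  then have "sibling_key c \<noteq> sibling_key j"
    using inj_on_sibling_key[of ?v] same_par assms(1) c2 unfolding psi_children_def inj_on_def
      by blast
  \<comment> \<open>the key of \<open>c\<close> immediately follows that of its parent \<open>?e\<close>\<close>
  ultimately have "sibling_key c < sibling_key j"
    using chained_psi_par(2)[OF c(1)] c unfolding sibling_key_def chained_def by auto
  moreover have "sibling_key ?e < sibling_key c" using sibling_key_par_less[OF c(1)] c(2) by simp
  ultimately have "psi.pos ?e < psi.pos c" "psi.pos c < psi.pos j"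
    using sibling_key_less_iff_pos_less[OF e2 c2] sibling_key_less_iff_pos_less[OF c2 assms(1)]
      same_par by auto
  then show False using e(2) p0 by simp
qed

lemma phi_par_psi: "psi.phi_par = par"
proof
  fix j
  show "psi.phi_par j = par j"
  proof (cases "j \<in> {2..m}")
    case True
    show ?thesis
    proof (cases "chained j")
      case False
      then have "psi_par j = par j" using True chain_top_not_chained unfolding psi_par_def by simp
      then show ?thesis using not_follows_elder_psi[OF True False] unfolding psi.phi_par_def by simp
    qed (use left_sibling_psi_chained in \<open>simp add: psi.phi_par_def\<close>)
  qed (simp add: psi.phi_par_eq_0 par_eq_0)
qed

end

section \<open>The two maps are mutually inverse\<close>

context planar_tree
begin

interpretation phi: marked_tree m phi_par elders
  by unfold_locales (rule elders_improper_parents)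

lemma chained_phi_iff_follows_elder: "phi.chained u \<longleftrightarrow> follows_elder u"
proof
  assume f: "follows_elder u"
  then have "phi_par u = left_sibling u" "u \<in> {2..m}"
    unfolding phi_par_def follows_elder_def by simp_all
  then show "phi.chained u"
    unfolding phi.chained_def using left_sibling(3)[OF f] beta_phi_par_left_sibling[OF f] by simp
next
  assume "phi.chained u"
  then have u: "u \<in> {2..m}" and marked: "phi_par u \<in> elders"
    and same_beta: "beta m phi_par u = beta m phi_par (phi_par u)"
    unfolding phi.chained_def by auto
  show "follows_elder u"
  proof (rule ccontr)
    assume "\<not> follows_elder u"
    then have "phi_par u = par u" unfolding phi_par_def by simp
    then show False
      using beta_phi_par_less_elder marked same_beta beta_par_le_beta_phi_par[OF u] by fastforce
  qed
qed

lemma funpow_phi_par_run: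
  assumes "u \<in> {2..m}" "k \<le> pos u - run_start (par u) (pos u)"
  shows "(phi_par ^^ k) u = ord (par u) ! (pos u - k)"
  using assms(2)
proof (induction k)
  case 0
  then show ?case using ord_nth_pos[OF assms(1)] by simp
next
  case (Suc k)
  let ?v = "par u" and ?p = "pos u"
  have l: "?p - k < length (ord ?v)" using pos_less[OF assms(1)] by simp
  have "elder_at ?v (?p - k - 1)" using run_start(2)[of ?v ?p "?p - k - 1"] Suc.prems by simp
  moreover have "0 < ?p - k" using Suc.prems by simp
  ultimately have "phi_par (ord ?v ! (?p - k)) = ord ?v ! (?p - k - 1)" using phi_par_ord_nth[OF l]
    by simp
  then show ?case using Suc by simp
qed

lemma chain_top_phi: "u \<in> {2..m} \<Longrightarrow> phi.chain_top u = run_first u"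
proof -
  assume u: "u \<in> {2..m}"
  let ?v = "par u" and ?p = "pos u"
  let ?s = "run_start ?v ?p"
  have s: "?s \<le> ?p" using run_start(1) .
  have s_less: "?s < length (ord ?v)" using s pos_less[OF u] by simp
  have "phi.chain_len u = ?p - ?s" unfolding phi.chain_len_def
  proof (rule Least_equality)
    have "\<not> follows_elder (ord ?v ! ?s)"
      unfolding follows_elder_def using pos_ord_nth[OF s_less] ord_nth[OF s_less] run_start(3)
        by auto
    then show "\<not> phi.chained ((phi_par ^^ (?p - ?s)) u)"
      using funpow_phi_par_run[OF u] s chained_phi_iff_follows_elder by simp
  next
    fix k assume "\<not> phi.chained ((phi_par ^^ k) u)"
    then have "\<not> follows_elder (ord ?v ! (?p - k))" if "k < ?p - ?s"
      using funpow_phi_par_run[OF u] that chained_phi_iff_follows_elder by simp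
    moreover have "follows_elder (ord ?v ! (?p - k))" if "k < ?p - ?s"
    proof -
      have l: "?p - k < length (ord ?v)" using pos_less[OF u] by simp
      have "elder_at ?v (?p - k - 1)" using run_start(2)[of ?v ?p "?p - k - 1"] that by simp
      then show ?thesis
        unfolding follows_elder_def using pos_ord_nth[OF l] ord_nth[OF l] that by simp
    qed
    ultimately show "?p - ?s \<le> k" by (meson not_le)
  qed
  then show "phi.chain_top u = run_first u"
    unfolding phi.chain_top_def run_first_def using funpow_phi_par_run[OF u] s by simp
qed

lemma psi_par_phi: "phi.psi_par = par"
proof
  fix u
  show "phi.psi_par u = par u"
  proof (cases "u \<in> {2..m}")
    case True
    have "\<not> follows_elder (run_first u)"
      using run_first[OF True] run_start(3) unfolding follows_elder_def by auto
    then show ?thesis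
      unfolding phi.psi_par_def using True chain_top_phi[OF True] run_first[OF True]
      unfolding phi_par_def by simp
  qed (simp add: phi.psi_par_eq_0 par_eq_0)
qed

lemma sibling_key_ord_Suc_less:
  assumes si: "Suc i < length (ord v)"
  shows "phi.sibling_key (ord v ! i) < phi.sibling_key (ord v ! Suc i)"
proof (cases "elder_at v i")
  case True
  have il: "i < length (ord v)" using si by simp
  have "phi_par (ord v ! Suc i) = ord v ! i" using phi_par_ord_nth[OF si] True by simp
  then have "phi.depth (ord v ! Suc i) = Suc (phi.depth (ord v ! i))"
    using phi.depth_par ord_nth[OF si] by metis
  moreover have "beta m phi_par (ord v ! Suc i) = beta m phi_par (ord v ! i)"
    using beta_phi_par_ord_nth[OF si] beta_phi_par_ord_nth[OF il] run_end_Suc(2)[OF il True] by simp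
  ultimately show ?thesis unfolding phi.sibling_key_def by simp
next
  case False
  have il: "i < length (ord v)" using si by simp
  have "run_end v i = i" by (rule run_end_eqI) (use il False in auto)
  moreover have "Suc i \<le> run_end v (Suc i)" "run_end v (Suc i) < length (ord v)"
    using run_end[OF si] by auto
  then have "beta m par (ord v ! i) < beta m par (ord v ! run_end v (Suc i))"
    using beta_less_if_not_elder_at[OF False] by simp
  ultimately show ?thesis
    using beta_phi_par_ord_nth[OF il] beta_phi_par_ord_nth[OF si] unfolding phi.sibling_key_def
      by simp
qed

lemma sorted_sibling_key_ord: "sorted_wrt (<) (map phi.sibling_key (ord v))"
proof -
  have "transp ((<) :: nat \<times> nat \<Rightarrow> _)" by (auto intro: transpI)
  then show ?thesis using sibling_key_ord_Suc_less by (simp add: sorted_wrt_iff_nth_Suc_transp)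
qed

lemma psi_ord_phi: "phi.psi_ord = ord"
proof
  fix v
  show "phi.psi_ord v = ord v"
  proof (cases "v \<in> {1..m}")
    case True
    have "set (phi.psi_ord v) = set (ord v)"
      using phi.psi_ord(1)[OF True] set_ord[OF True] psi_par_phi unfolding phi.psi_children_def
        by simp
    then show ?thesis
      using strict_sorted_map_unique[OF phi.psi_ord(3)[OF True] sorted_sibling_key_ord] by simp
  qed (auto simp: phi.psi_ord_def ord_eq_Nil)
qed

end

section \<open>The bijection and the generating functions\<close>

lemma planar_trees_iff: "(par, ord) \<in> planar_trees m \<longleftrightarrow> planar_tree m par ord"
  unfolding planar_trees_def planar_tree_def planar_tree_axioms_def cayley_tree_def by auto

lemma marked_trees_iff:
  "(par, S) \<in> Sigma (cayley_trees m) (\<lambda>par. Pow (improper_parents m par)) \<longleftrightarrow> marked_tree m par S"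
  unfolding cayley_trees_def marked_tree_def marked_tree_axioms_def cayley_tree_def by auto

definition planar_to_marked ::
    "nat \<Rightarrow> (nat \<Rightarrow> nat) \<times> (nat \<Rightarrow> nat list) \<Rightarrow> (nat \<Rightarrow> nat) \<times> nat set" where
  "planar_to_marked m =
     (\<lambda>(par, ord). (planar_tree.phi_par m par ord, planar_tree.elders m par ord))"

definition marked_to_planar ::
    "nat \<Rightarrow> (nat \<Rightarrow> nat) \<times> nat set \<Rightarrow> (nat \<Rightarrow> nat) \<times> (nat \<Rightarrow> nat list)" where
  "marked_to_planar m = (\<lambda>(par, S). (marked_tree.psi_par m par S, marked_tree.psi_ord m par S))"

lemma planar_to_marked_in:
  assumes "P \<in> planar_trees m"
  shows "planar_to_marked m P \<in> Sigma (cayley_trees m) (\<lambda>par. Pow (improper_parents m par))"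
    "marked_to_planar m (planar_to_marked m P) = P"
proof -
  obtain par ord where P: "P = (par, ord)" by (cases P)
  interpret planar_tree m par ord using assms planar_trees_iff P by blast
  show "planar_to_marked m P \<in> Sigma (cayley_trees m) (\<lambda>par. Pow (improper_parents m par))"
    unfolding P planar_to_marked_def cayley_trees_def
      using is_cayley_phi_par elders_improper_parents
    by simp
  show "marked_to_planar m (planar_to_marked m P) = P"
    unfolding P planar_to_marked_def marked_to_planar_def using psi_par_phi psi_ord_phi by simp
qed

lemma marked_to_planar_in:
  assumes "Q \<in> Sigma (cayley_trees m) (\<lambda>par. Pow (improper_parents m par))"
  shows "marked_to_planar m Q \<in> planar_trees m" "planar_to_marked m (marked_to_planar m Q) = Q"
proof -
  obtain par S where Q: "Q = (par, S)" by (cases Q)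
  interpret marked_tree m par S using assms marked_trees_iff Q by blast
  show "marked_to_planar m Q \<in> planar_trees m"
    unfolding Q marked_to_planar_def using planar_trees_iff planar_tree_psi by simp
  show "planar_to_marked m (marked_to_planar m Q) = Q"
    unfolding Q planar_to_marked_def marked_to_planar_def using phi_par_psi elders_psi by simp
qed

lemma bij_betw_planar_to_marked:
  "bij_betw (planar_to_marked m) (planar_trees m)
     (Sigma (cayley_trees m) (\<lambda>par. Pow (improper_parents m par)))"
  by (rule bij_betw_byWitness[where f' = "marked_to_planar m"])
    (simp_all add: planar_to_marked_in marked_to_planar_in image_subset_iff)

lemma planar_to_marked_statistics:
  assumes "(par, ord) \<in> planar_trees m"
  shows "impe_C m (fst (planar_to_marked m (par, ord))) = impe_O m par ord + eld m par ord"
    "deg_root m (fst (planar_to_marked m (par, ord))) = young_root m par ord"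
    "card (snd (planar_to_marked m (par, ord))) = eld m par ord"
proof -
  interpret planar_tree m par ord using assms planar_trees_iff by blast
  show "impe_C m (fst (planar_to_marked m (par, ord))) = impe_O m par ord + eld m par ord"
    "deg_root m (fst (planar_to_marked m (par, ord))) = young_root m par ord"
    "card (snd (planar_to_marked m (par, ord))) = eld m par ord"
    using impe_C_phi_par deg_root_phi_par card_elders unfolding planar_to_marked_def by simp_all
qed

lemma finite_cayley_trees: "finite (cayley_trees m)"
proof (rule finite_imageD)
  show "inj_on (\<lambda>f. restrict f {0..m}) (cayley_trees m)"
  proof (rule inj_onI, rule ext)
    fix f g v
    assume "f \<in> cayley_trees m" "g \<in> cayley_trees m" and eq: "restrict f {0..m} = restrict g {0..m}"
    then have "f v = 0" "g v = 0" if "v > m"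
      using that unfolding cayley_trees_def is_cayley_def by auto
    moreover have "f v = g v" if "v \<le> m" using fun_cong[OF eq, of v] that by simp
    ultimately show "f v = g v" by (cases "v \<le> m") auto
  qed
  have "restrict f {0..m} \<in> {0..m} \<rightarrow>\<^sub>E {0..m}" if "f \<in> cayley_trees m" for f
    using cayley_tree.par_le[of m f] that unfolding cayley_trees_def cayley_tree_def
    by (simp add: restrict_PiE_iff)
  then have "(\<lambda>f. restrict f {0..m}) ` cayley_trees m \<subseteq> {0..m} \<rightarrow>\<^sub>E {0..m}" by blast
  then show "finite ((\<lambda>f. restrict f {0..m}) ` cayley_trees m)"
    by (rule finite_subset) (simp add: finite_PiE)
qed

lemma (in cayley_tree) sum_Pow_improper_parents:
  fixes x y z t :: "'a::comm_semiring_1"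
  assumes "m \<ge> 1"
  shows "(\<Sum>S\<in>Pow (improper_parents m par). y ^ impe_C m par * t ^ card S
            * x ^ (deg_root m par - 1) * z ^ (m - 1 - impe_C m par - deg_root m par))
       = y ^ impe_C m par * (t + 1) ^ impp_C m par * x ^ (deg_root m par - 1)
            * z ^ (lead m par - deg_root m par - 1)"
proof -
  have "impp_C m par = card (improper_parents m par)"
    unfolding impp_C_def improper_parents_def ..
  moreover have "lead m par - deg_root m par - 1 = m - 1 - impe_C m par - deg_root m par"
    using lead_eq[OF assms] by simp
  moreover have "finite (improper_parents m par)" unfolding improper_parents_def by simp
  ultimately show ?thesis
    by (simp add: sum_Pow_power_card sum_distrib_left[symmetric] sum_distrib_right[symmetric]
        mult_ac)
qed

theorem proposition15:
  fixes n :: nat and x y z t :: "'a::comm_ring_1"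
  assumes "n > 1"
  shows "(\<Sum>T\<in>cayley_trees (n+1).
            y ^ impe_C (n+1) T * (t+1) ^ impp_C (n+1) T * x ^ (deg_root (n+1) T - 1)
            * z ^ (lead (n+1) T - deg_root (n+1) T - 1))
       = (\<Sum>(P, ord)\<in>planar_trees (n+1).
            y ^ (impe_O (n+1) P ord + eld (n+1) P ord) * t ^ eld (n+1) P ord
            * x ^ (young_root (n+1) P ord - 1)
            * z ^ (n - impe_O (n+1) P ord - young_root (n+1) P ord - eld (n+1) P ord))"
proof -
  let ?m = "n + 1"
  define w where "w (Q :: (nat \<Rightarrow> nat) \<times> nat set) =
    y ^ impe_C ?m (fst Q) * t ^ card (snd Q) * x ^ (deg_root ?m (fst Q) - 1)
    * z ^ (?m - 1 - impe_C ?m (fst Q) - deg_root ?m (fst Q))" for Q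
  have "(\<Sum>T\<in>cayley_trees ?m. y ^ impe_C ?m T * (t+1) ^ impp_C ?m T * x ^ (deg_root ?m T - 1)
            * z ^ (lead ?m T - deg_root ?m T - 1))
      = (\<Sum>T\<in>cayley_trees ?m. \<Sum>S\<in>Pow (improper_parents ?m T). w (T, S))"
    unfolding w_def fst_conv snd_conv
    by (rule sum.cong[OF refl], rule sym, rule cayley_tree.sum_Pow_improper_parents)
      (auto simp: cayley_trees_def cayley_tree_def)
  also have "\<dots> = (\<Sum>(T, S)\<in>Sigma (cayley_trees ?m) (\<lambda>T. Pow (improper_parents ?m T)). w (T, S))"
    by (rule sum.Sigma) (auto simp: finite_cayley_trees improper_parents_def)
  also have "\<dots> = (\<Sum>P\<in>planar_trees ?m. w (planar_to_marked ?m P))"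
    using sum.reindex_bij_betw[OF bij_betw_planar_to_marked, of w] by simp
  also have "\<dots> = (\<Sum>(P, ord)\<in>planar_trees (n+1).
            y ^ (impe_O (n+1) P ord + eld (n+1) P ord) * t ^ eld (n+1) P ord
            * x ^ (young_root (n+1) P ord - 1)
            * z ^ (n - impe_O (n+1) P ord - young_root (n+1) P ord - eld (n+1) P ord))"
    by (rule sum.cong[OF refl])
      (auto simp: w_def planar_to_marked_statistics add_ac split: prod.splits)
  finally show ?thesis .
qed

end
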